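(* Let $(S,\mathcal B_S,\mu)$ be a standard Lebesgue space with $\sigma$-finite measure $\mu$, and $f,g:S\to[0,\infty)$ measurable with $\int_S f\,d\mu=\int_S g\,d\mu=1$. Let $(X,Y)$ satisfy \[ \mathbb P(X\le x,Y\le y)=\exp\Big\{-\int_S \max\Big(\frac{f(s)}{x},\frac{g(s)}{y}\Big)\mu(ds)\Big\},\qquad x,y>0, \] and let $(X_i,Y_i)$, $i\ge1$, be i.i.d. copies. Let $D_t=\{s:f(s)\le t g(s)\}$, $E_t=S\setminus D_t$, and suppose $\mu(E_t)>0$ and $\mu(D_t)>0$ for all $t\in(0,\infty)$. Define \[ \gamma_+(t)=\frac1t\int_S f\,\mathbf 1_{\{f>tg\}}\,d\mu,\qquad \gamma_-(t)=\frac1t\int_S g\,\mathbf 1_{\{g>tf\}}\,d\mu. \] Then $\gamma_+\in RV_{-\alpha_+}$ and $\gamma_-\in RV_{-\alpha_-}$ for some $\alpha_+>0,\alpha_->0$ if and only if \[ \Big(\frac1{\kappa_n^+}\max_{1\le i\le n}\frac{X_i}{Y_i},\;\frac1{\kappa_n^-}\max_{1\le i\le n}\frac{Y_i}{X_i}\Big)\Rightarrow(\zeta_{\alpha_+},\zeta_{\alpha_-}), \] where $\kappa_n^\pm\sim(1/\gamma_\pm)^{\leftarrow}(n)$ and $\zeta_{\alpha_+},\zeta_{\alpha_-}$ are independent standard $\alpha_+$- and $\alpha_-$-Fréchet random variables (when $\alpha_+=\alpha_-=\alpha$, they are two independent standard $\alpha$-Fréchet random variables).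
   Context: $RV_{-\rho}$: $U(tx)/U(t)\to x^{-\rho}$ for all $x>0$. $U^{\leftarrow}(y)=\inf\{s:U(s)\ge y\}$. Standard $\alpha$-Fréchet: $\mathbb P(\zeta_\alpha\le t)=\exp(-t^{-\alpha})$, $t>0$. Convention $1/0=\infty$. *)

theory Defs
  imports "HOL-Probability.Probability" "HOL-Library.Landau_Symbols"
begin

text \<open>Regular variation: U is in RV with index r iff U(tx)/U(t) tends to x powr r
  as t tends to infinity, for every x > 0. (So U in RV_{-rho} is regvar U (-rho).)\<close>
definition regvar :: "(real \<Rightarrow> real) \<Rightarrow> real \<Rightarrow> bool" where
  "regvar U r \<longleftrightarrow> (\<forall>x>0. ((\<lambda>t. U (t * x) / U t) \<longlongrightarrow> x powr r) at_top)"

definition geninv :: "(real \<Rightarrow> real) \<Rightarrow> real \<Rightarrow> real" where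
  "geninv U y = Inf {s. 0 < s \<and> U s \<ge> y}"

definition frechet_cdf :: "real \<Rightarrow> real \<Rightarrow> real" where
  "frechet_cdf a t = (if t > 0 then exp (- (t powr (- a))) else 0)"

definition frechet :: "real \<Rightarrow> real measure" where
  "frechet a = interval_measure (frechet_cdf a)"

definition weak_conv :: "(nat \<Rightarrow> 'a::topological_space measure) \<Rightarrow> 'a measure \<Rightarrow> bool" where
  "weak_conv Ms L \<longleftrightarrow>
     (\<forall>h :: 'a \<Rightarrow> real. continuous_on UNIV h \<longrightarrow> bounded (range h) \<longrightarrow>
        (\<lambda>n. \<integral>z. h z \<partial>(Ms n)) \<longlonglongrightarrow> (\<integral>z. h z \<partial>L))"

definition gamma_plus :: "'a measure \<Rightarrow> ('a \<Rightarrow> real) \<Rightarrow> ('a \<Rightarrow> real) \<Rightarrow> real \<Rightarrow> real" where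
  "gamma_plus M f g t = (1 / t) * (\<integral>s. f s * indicator {s. f s > t * g s} s \<partial>M)"

definition gamma_minus :: "'a measure \<Rightarrow> ('a \<Rightarrow> real) \<Rightarrow> ('a \<Rightarrow> real) \<Rightarrow> real \<Rightarrow> real" where
  "gamma_minus M f g t = (1 / t) * (\<integral>s. g s * indicator {s. g s > t * f s} s \<partial>M)"

end

theory Submission
  imports Defs
begin

text \<open>For a single pair with distribution function exp (- \<integral>max (f / x) (g / y) d\<mu>),
  discretising the event {X > t Y} along geometric grids shows that for every q > 1
    t gamma_plus (q t) / V t \<le> P (X / Y > t) \<le> t gamma_plus (t / q) / V t,
  where V t = \<integral>max f (t g) d\<mu> satisfies V t / t \<longrightarrow> 1; so the tail of X / Y is gamma_plus up
  to the factor q. Once the thresholds exceed 1 the events {X / Y > s} and {Y / X > s'} are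
  disjoint, so by independence the distribution function of the pair of scaled maxima at (x, y) is
  \<Prod>i\<le>n. 1 - P (X / Y > \<kappa>p n x) - P (Y / X > \<kappa>m n y).
  It converges to exp (- x powr (-ap) - y powr (-am)) exactly when n gamma_plus (\<kappa>p n x)
  \<longrightarrow> x powr (-ap) and n gamma_minus (\<kappa>m n y) \<longrightarrow> y powr (-am), and for
  \<kappa> n \<sim> (1 / gamma)\<leftarrow>(n) this is equivalent to regular variation of gamma.
  In the plane, convergence of the distribution functions at every point gives weak convergence.\<close>

section \<open>The spectral densities\<close>

locale spectral_densities =
  fixes M :: "'a measure" and f g :: "'a \<Rightarrow> real"
  assumes f_measurable[measurable]: "f \<in> borel_measurable M"
    and g_measurable[measurable]: "g \<in> borel_measurable M"
    and f_nonneg: "\<And>s. f s \<ge> 0" and g_nonneg: "\<And>s. g s \<ge> 0"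
    and f_nn_integral: "(\<integral>\<^sup>+ s. ennreal (f s) \<partial>M) = 1"
    and g_nn_integral: "(\<integral>\<^sup>+ s. ennreal (g s) \<partial>M) = 1"
begin

lemma integrable_f[simp]: "integrable M f"
  by (rule integrableI_nonneg) (auto simp: f_nonneg f_nn_integral)

lemma integrable_g[simp]: "integrable M g"
  by (rule integrableI_nonneg) (auto simp: g_nonneg g_nn_integral)

lemma integral_f: "(\<integral>s. f s \<partial>M) = 1"
  by (subst integral_eq_nn_integral) (auto simp: f_nonneg f_nn_integral)

lemma integral_g: "(\<integral>s. g s \<partial>M) = 1"
  by (subst integral_eq_nn_integral) (auto simp: g_nonneg g_nn_integral)

text \<open>If the pair (A, B) has distribution function exp (- \<integral>max (f / x) (g / y) d\<mu>),
  then P (A \<le> x / c, B \<le> x / d) = exp (- exponent c d / x).\<close>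
definition exponent :: "real \<Rightarrow> real \<Rightarrow> real" where
  "exponent c d = (\<integral>s. max (c * f s) (d * g s) \<partial>M)"

lemma integrable_max_scaled[simp]: "integrable M (\<lambda>s. max (c * f s) (d * g s))"
  by auto

lemma exponent_bounds:
  assumes "0 \<le> c" "0 \<le> d"
  shows "max c d \<le> exponent c d" and "exponent c d \<le> c + d"
proof -
  have "(\<integral>s. c * f s \<partial>M) \<le> exponent c d" and "(\<integral>s. d * g s \<partial>M) \<le> exponent c d"
    unfolding exponent_def by (rule integral_mono; simp)+
  then show "max c d \<le> exponent c d"
    by (simp add: integral_f integral_g)
  have "exponent c d \<le> (\<integral>s. c * f s + d * g s \<partial>M)"
    unfolding exponent_def using assms f_nonneg g_nonneg by (intro integral_mono) auto
  then show "exponent c d \<le> c + d"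
    by (simp add: integral_f integral_g)
qed

lemma exponent_mono:
  assumes "c \<le> c'" shows "exponent c d \<le> exponent c' d"
proof -
  have "c * f s \<le> c' * f s" for s using assms f_nonneg[of s] by (rule mult_right_mono)
  then show ?thesis unfolding exponent_def by (intro integral_mono max.mono) auto
qed

lemma exponent_pos: "t > 0 \<Longrightarrow> exponent 1 t > 0"
  using exponent_bounds(1)[of 1 t] by linarith

definition tail_mass :: "real \<Rightarrow> real" where
  "tail_mass t = (\<integral>s. f s * indicator {s. f s > t * g s} s \<partial>M)"

lemma gamma_plus_eq: "gamma_plus M f g t = tail_mass t / t"
  unfolding gamma_plus_def tail_mass_def by simp

lemma integrable_tail[simp]: "integrable M (\<lambda>s. f s * indicator {s. f s > t * g s} s)"
  by (rule Bochner_Integration.integrable_bound[OF integrable_f])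
     (auto simp: f_nonneg split: split_indicator)

lemma tail_mass_nonneg: "0 \<le> tail_mass t"
  unfolding tail_mass_def by (rule integral_nonneg_AE) (auto simp: f_nonneg)

lemma tail_mass_le_1: "tail_mass t \<le> 1"
proof -
  have "tail_mass t \<le> (\<integral>s. f s \<partial>M)"
    unfolding tail_mass_def by (rule integral_mono) (auto simp: f_nonneg split: split_indicator)
  then show ?thesis by (simp add: integral_f)
qed

lemma tail_mass_antimono:
  assumes "s \<le> t" shows "tail_mass t \<le> tail_mass s"
  unfolding tail_mass_def
proof (rule integral_mono)
  fix x
  have "s * g x \<le> t * g x" using assms g_nonneg[of x] by (simp add: mult_right_mono)
  then show "f x * indicator {s. t * g s < f s} x \<le> f x * indicator {r. s * g r < f r} x"
    using f_nonneg[of x] by (auto split: split_indicator)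
qed auto

text \<open>Since \<integral>f = 1, the function f cannot vanish a.e. on every set {f > g / (n + 1)}.\<close>
lemma tail_mass_pos: "\<exists>s>0. tail_mass s > 0"
proof (rule ccontr)
  assume "\<not> ?thesis"
  then have zero: "tail_mass s = 0" if "s > 0" for s
    using that tail_mass_nonneg by (meson not_le order.antisym)
  have "AE x in M. f x * indicator {s. f s > (1 / Suc n) * g s} x = 0" for n :: nat
    using zero[of "1 / Suc n"] integral_nonneg_eq_0_iff_AE[OF integrable_tail[of "1 / Suc n"]]
    unfolding tail_mass_def by (simp add: f_nonneg del: of_nat_Suc)
  then have "AE x in M. \<forall>n::nat. f x * indicator {s. f s > (1 / Suc n) * g s} x = 0"
    unfolding AE_all_countable by blast
  then have "AE x in M. f x = 0"
  proof (rule eventually_mono)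
    fix x assume vanish: "\<forall>n::nat. f x * indicator {s. f s > (1 / Suc n) * g s} x = 0"
    show "f x = 0"
    proof (rule ccontr)
      assume "f x \<noteq> 0"
      then have fx: "f x > 0" using f_nonneg[of x] by simp
      obtain n :: nat where "g x / f x < Suc n"
        using reals_Archimedean2 by (metis of_nat_Suc less_trans lessI of_nat_less_iff)
      then have "(1 / Suc n) * g x < f x" using fx by (simp add: field_simps)
      then show False using vanish[rule_format, of n] fx by (auto split: split_indicator)
    qed
  qed
  then have "(\<integral>s. f s \<partial>M) = (\<integral>s. 0 \<partial>M)"
    by (rule integral_cong_AE[OF f_measurable borel_measurable_const])
  then show False by (simp add: integral_f)
qed

lemma exponent_diff_lower:
  assumes "q > 1"
  shows "(1 - 1/q) * tail_mass (q * t) \<le> exponent 1 t - exponent (1/q) t"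
proof -
  have "(1 - 1/q) * tail_mass (q * t)
      = (\<integral>s. (1 - 1/q) * (f s * indicator {s. f s > (q * t) * g s} s) \<partial>M)"
    unfolding tail_mass_def by simp
  also have "\<dots> \<le> (\<integral>s. max (f s) (t * g s) - max ((1/q) * f s) (t * g s) \<partial>M)"
  proof (rule integral_mono)
    fix x
    have "f x / q \<le> f x"
      using assms f_nonneg[of x] mult_right_mono[of 1 q "f x"]
      by (simp add: divide_le_eq mult.commute)
    moreover have "f x > (q * t) * g x \<longleftrightarrow> f x / q > t * g x" using assms by (simp add: field_simps)
    ultimately show "(1 - 1/q) * (f x * indicator {s. f s > (q * t) * g s} x)
        \<le> max (f x) (t * g x) - max ((1/q) * f x) (t * g x)"
      by (auto simp: algebra_simps split: split_indicator)
  qed (auto intro!: integrable_diff)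
  also have "\<dots> = exponent 1 t - exponent (1/q) t"
    unfolding exponent_def by (simp add: Bochner_Integration.integral_diff)
  finally show ?thesis .
qed

lemma exponent_diff_upper:
  assumes "q > 1"
  shows "exponent q t - exponent 1 t \<le> (q - 1) * tail_mass (t / q)"
proof -
  have "exponent q t - exponent 1 t = (\<integral>s. max (q * f s) (t * g s) - max (f s) (t * g s) \<partial>M)"
    unfolding exponent_def by (simp add: Bochner_Integration.integral_diff)
  also have "\<dots> \<le> (\<integral>s. (q - 1) * (f s * indicator {s. f s > (t / q) * g s} s) \<partial>M)"
  proof (rule integral_mono[OF _ integrable_mult_right[OF integrable_tail]])
    fix x
    have "f x \<le> q * f x" using assms f_nonneg[of x] mult_right_mono[of 1 q "f x"] by simp
    moreover have "f x > (t / q) * g x \<longleftrightarrow> q * f x > t * g x" using assms by (simp add: field_simps)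
    ultimately show "max (q * f x) (t * g x) - max (f x) (t * g x)
        \<le> (q - 1) * (f x * indicator {s. f s > (t / q) * g s} x)"
      by (auto simp: algebra_simps split: split_indicator split_max)
  qed (auto intro!: integrable_diff)
  also have "\<dots> = (q - 1) * tail_mass (t / q)"
    by (simp add: tail_mass_def)
  finally show ?thesis .
qed

lemma exponent_over_identity: "((\<lambda>t. exponent 1 t / t) \<longlongrightarrow> 1) at_top"
proof (rule tendsto_sandwich[where f = "\<lambda>t. 1" and h = "\<lambda>t. 1 + 1 / t"])
  show "eventually (\<lambda>t. 1 \<le> exponent 1 t / t) at_top"
    using eventually_gt_at_top[of 0]
  proof eventually_elim
    case (elim t)
    then show ?case using exponent_bounds(1)[of 1 t] by simp
  qed
  show "eventually (\<lambda>t. exponent 1 t / t \<le> 1 + 1 / t) at_top"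
    using eventually_gt_at_top[of 0]
  proof eventually_elim
    case (elim t)
    then show ?case using exponent_bounds(2)[of 1 t] by (simp add: field_simps)
  qed
  have "((\<lambda>t::real. 1 + 1 / t) \<longlongrightarrow> 1 + 0) at_top"
    by (intro tendsto_intros tendsto_divide_0[OF tendsto_const]
        filterlim_at_top_imp_at_infinity[OF filterlim_ident])
  then show "((\<lambda>t::real. 1 + 1 / t) \<longlongrightarrow> 1) at_top" by simp
qed simp

lemma gamma_plus_nonneg: "t > 0 \<Longrightarrow> gamma_plus M f g t \<ge> 0"
  using tail_mass_nonneg by (simp add: gamma_plus_eq)

lemma gamma_plus_le: "t > 0 \<Longrightarrow> gamma_plus M f g t \<le> 1 / t"
  using tail_mass_le_1 by (simp add: gamma_plus_eq divide_right_mono)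

lemma gamma_plus_antimono:
  assumes "0 < s" "s \<le> t" shows "gamma_plus M f g t \<le> gamma_plus M f g s"
  using tail_mass_antimono[OF assms(2)] tail_mass_nonneg[of t] assms
  by (simp add: gamma_plus_eq frac_le)

text \<open>Otherwise the antitone gamma_plus vanishes on a half-line, where the ratio 0 / 0 = 0 cannot
  tend to 2 powr (-a).\<close>
lemma gamma_plus_pos_if_regvar:
  assumes "regvar (gamma_plus M f g) (-a)" "t > 0" shows "gamma_plus M f g t > 0"
proof (rule ccontr)
  assume "\<not> ?thesis"
  then have vanish: "gamma_plus M f g s = 0" if "s \<ge> t" for s
    using gamma_plus_antimono[OF assms(2) that] gamma_plus_nonneg[of s]
      gamma_plus_nonneg[OF assms(2)] that assms(2) by simp
  have "eventually (\<lambda>s. gamma_plus M f g (s * 2) / gamma_plus M f g s = 0) at_top"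
    using eventually_ge_at_top[of t] by eventually_elim (simp add: vanish)
  moreover have "((\<lambda>s. gamma_plus M f g (s * 2) / gamma_plus M f g s) \<longlongrightarrow> 2 powr (-a)) at_top"
    using assms(1) unfolding regvar_def by simp
  ultimately have "((\<lambda>s::real. 0::real) \<longlongrightarrow> 2 powr (-a)) at_top"
    using Lim_transform_eventually by fastforce
  then show False by (simp add: tendsto_const_iff)
qed

end

lemma spectral_densities_swap: "spectral_densities M f g \<Longrightarrow> spectral_densities M g f"
  unfolding spectral_densities_def by auto

lemma gamma_minus_eq_gamma_plus_swap: "gamma_minus M f g = gamma_plus M g f"
  unfolding gamma_minus_def gamma_plus_def by auto

section \<open>The ratio of a single pair\<close>

lemma exp_neg_diff_ge:
  fixes a b z :: real shows "(b - a) * z * exp (-(b * z)) \<le> exp (-(a * z)) - exp (-(b * z))"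
proof -
  have "exp (-(a * z)) = exp (-(b * z)) * exp ((b - a) * z)"
    by (simp add: exp_add[symmetric] algebra_simps)
  then have "exp (-(b * z)) * (1 + (b - a) * z) \<le> exp (-(a * z))"
    by (simp add: mult_left_mono)
  then show ?thesis by (simp add: algebra_simps)
qed

lemma exp_neg_diff_le:
  fixes a b z :: real shows "exp (-(a * z)) - exp (-(b * z)) \<le> (b - a) * z * exp (-(a * z))"
proof -
  have "exp (-(b * z)) = exp (-(a * z)) * exp (-((b - a) * z))"
    by (simp add: exp_add[symmetric] algebra_simps)
  moreover have "1 + (-((b - a) * z)) \<le> exp (-((b - a) * z))" by (rule exp_ge_add_one_self)
  ultimately have "exp (-(a * z)) * (1 - (b - a) * z) \<le> exp (-(b * z))"
    by (simp add: mult_left_mono)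
  then show ?thesis by (simp add: algebra_simps)
qed

text \<open>Riemann-sum comparisons of the sums over a geometric grid with the telescoping sum
  \<Sum>j. exp (- v (j + 1)) - exp (- v j) for v j = b / (\<epsilon> q^j).\<close>
lemma sum_exp_diff_geometric_lower:
  fixes a b q \<epsilon> :: real and m :: nat
  assumes "0 < b" "a \<le> b" "1 < q" "0 < \<epsilon>"
  shows "(b - a) / (b * (q - 1)) * (exp (-(q * b / (\<epsilon> * q^m))) - exp (-(q * b / \<epsilon>)))
     \<le> (\<Sum>j<m. exp (-(a / (\<epsilon> * q^j))) - exp (-(b / (\<epsilon> * q^j))))"
proof -
  define v where "v j = b / (\<epsilon> * q^j)" for j
  have v_nonneg: "v j \<ge> 0" for j using assms by (simp add: v_def)
  have v_Suc: "q * v (Suc j) = v j" for j using assms by (simp add: v_def field_simps)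
  have "(b - a) / (b * (q - 1)) * (exp (-(q * b / (\<epsilon> * q^m))) - exp (-(q * b / \<epsilon>)))
      = (b - a) / (b * (q - 1)) * (\<Sum>j<m. exp (-(q * v (Suc j))) - exp (-(q * v j)))"
    by (subst sum_lessThan_telescope) (simp add: v_def)
  also have "\<dots> = (\<Sum>j<m. (b - a) / (b * (q - 1)) * (exp (-(1 * v j)) - exp (-(q * v j))))"
    by (simp add: v_Suc sum_distrib_left)
  also have "\<dots> \<le> (\<Sum>j<m. (b - a) / (b * (q - 1)) * ((q - 1) * v j * exp (-(1 * v j))))"
    using assms v_nonneg by (intro sum_mono mult_left_mono exp_neg_diff_le) auto
  also have "\<dots> = (\<Sum>j<m. (b - a) * (1 / (\<epsilon> * q^j)) * exp (-(b * (1 / (\<epsilon> * q^j)))))"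
    using assms by (intro sum.cong refl) (simp add: v_def field_simps)
  also have "\<dots> \<le> (\<Sum>j<m. exp (-(a * (1 / (\<epsilon> * q^j)))) - exp (-(b * (1 / (\<epsilon> * q^j)))))"
    by (intro sum_mono exp_neg_diff_ge)
  finally show ?thesis by simp
qed

lemma sum_exp_diff_geometric_upper:
  fixes a b q \<epsilon> :: real and m :: nat
  assumes "0 < b" "b \<le> a" "1 < q" "0 < \<epsilon>"
  shows "(\<Sum>j<m. exp (-(b / (\<epsilon> * q^Suc j))) - exp (-(a / (\<epsilon> * q^Suc j))))
     \<le> (a - b) / b * (q / (q - 1))"
proof -
  define w where "w j = b / (\<epsilon> * q^Suc j)" for j
  have w_nonneg: "w j \<ge> 0" for j using assms by (simp add: w_def)
  have w_Suc: "w j / q = w (Suc j)" for j using assms by (simp add: w_def field_simps)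
  have "(\<Sum>j<m. exp (-(b / (\<epsilon> * q^Suc j))) - exp (-(a / (\<epsilon> * q^Suc j))))
     \<le> (\<Sum>j<m. (a - b) * (1 / (\<epsilon> * q^Suc j)) * exp (-(b * (1 / (\<epsilon> * q^Suc j)))))"
  proof (intro sum_mono)
    fix j
    show "exp (-(b / (\<epsilon> * q^Suc j))) - exp (-(a / (\<epsilon> * q^Suc j)))
        \<le> (a - b) * (1 / (\<epsilon> * q^Suc j)) * exp (-(b * (1 / (\<epsilon> * q^Suc j))))"
      using exp_neg_diff_le[of b "1 / (\<epsilon> * q^Suc j)" a] by simp
  qed
  also have "\<dots> = (\<Sum>j<m. (a - b) / b / (q - 1) * ((q - 1) * w j * exp (-(1 * w j))))"
    using assms by (intro sum.cong refl) (simp add: w_def field_simps)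
  also have "\<dots> \<le> (\<Sum>j<m. (a - b) / b / (q - 1) * (q * (exp (-((1/q) * w j)) - exp (-(1 * w j)))))"
  proof (intro sum_mono mult_left_mono)
    fix j
    have "q * ((1 - 1/q) * w j * exp (-(1 * w j))) \<le> q * (exp (-((1/q) * w j)) - exp (-(1 * w j)))"
      using exp_neg_diff_ge[of 1 "1/q" "w j"] assms by (intro mult_left_mono) auto
    then show "(q - 1) * w j * exp (-(1 * w j)) \<le> q * (exp (-((1/q) * w j)) - exp (-(1 * w j)))"
      using assms by (simp add: algebra_simps)
  qed (use assms in auto)
  also have "\<dots> = (a - b) / b / (q - 1) * q * (\<Sum>j<m. exp (- w (Suc j)) - exp (- w j))"
    by (simp add: sum_distrib_left w_Suc[symmetric] mult.assoc)
  also have "\<dots> = (a - b) / b / (q - 1) * q * (exp (- w m) - exp (- w 0))"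
    by (subst sum_lessThan_telescope) simp
  also have "\<dots> \<le> (a - b) / b / (q - 1) * q * 1"
  proof (intro mult_left_mono)
    have "exp (- w m) \<le> 1" using w_nonneg[of m] by simp
    then show "exp (- w m) - exp (- w 0) \<le> 1" using exp_gt_zero[of "- w 0"] by linarith
  qed (use assms in auto)
  finally show ?thesis by simp
qed

lemma exp_neg_le_inverse: "y > 0 \<Longrightarrow> exp (- y) \<le> 1 / (y :: real)"
  using exp_ge_add_one_self[of y] by (simp add: exp_minus field_simps del: exp_ge_add_one_self)

lemma one_minus_exp_neg_le: "1 - exp (- z) \<le> (z :: real)"
  using exp_ge_add_one_self[of "-z"] by simp

lemma mono_bracket:
  fixes x :: "nat \<Rightarrow> real"
  assumes "mono x" "x 0 < y" "y \<le> x m" shows "\<exists>j<m. x j < y \<and> y \<le> x (Suc j)"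
  using assms(3)
proof (induction m)
  case 0 then show ?case using assms(2) by simp
next
  case (Suc m)
  show ?case
  proof (cases "y \<le> x m")
    case True then show ?thesis using Suc.IH by (meson less_SucI)
  next
    case False then show ?thesis using Suc.prems by (intro exI[of _ m]) auto
  qed
qed

locale spectral_pair = spectral_densities M f g + prob_space P
  for M :: "'a measure" and f g and P :: "'w measure" +
  fixes A B :: "'w \<Rightarrow> real"
  assumes A_measurable[measurable]: "A \<in> borel_measurable P"
    and B_measurable[measurable]: "B \<in> borel_measurable P"
    and joint_cdf: "\<And>x y. x > 0 \<Longrightarrow> y > 0 \<Longrightarrow>
      prob {w \<in> space P. A w \<le> x \<and> B w \<le> y} = exp (- (\<integral>s. max (f s / x) (g s / y) \<partial>M))"
begin

lemma swap: "spectral_pair M g f P B A"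
  using spectral_densities_axioms prob_space_axioms joint_cdf
  by (auto simp: spectral_pair_def spectral_pair_axioms_def spectral_densities_swap
      max.commute conj_commute)

definition box :: "real \<Rightarrow> real \<Rightarrow> real \<Rightarrow> 'w set" where
  "box x c d = {w \<in> space P. A w \<le> x / c \<and> B w \<le> x / d}"

lemma box_sets[measurable]: "box x c d \<in> sets P"
  unfolding box_def by measurable

lemma prob_box:
  assumes "x > 0" "c > 0" "d > 0"
  shows "prob (box x c d) = exp (- (exponent c d / x))"
proof -
  have "max (f s / (x / c)) (g s / (x / d)) = max (c * f s) (d * g s) / x" for s
    using assms by (simp add: max_divide_distrib_right mult.commute)
  then show ?thesis
    using joint_cdf[of "x / c" "x / d"] assms by (simp add: box_def exponent_def)
qed

lemma prob_box_diff:
  assumes "x > 0" "0 < c'" "c' \<le> c" "d > 0"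
  shows "prob (box x c' d - box x c d) = exp (- (exponent c' d / x)) - exp (- (exponent c d / x))"
proof -
  have "x / c \<le> x / c'" using assms by (intro divide_left_mono) auto
  then have "box x c d \<subseteq> box x c' d" by (auto simp: box_def)
  then show ?thesis
    using assms by (simp add: finite_measure_Diff prob_box)
qed

lemma prob_A_le: assumes "x > 0" shows "prob {w \<in> space P. A w \<le> x} \<le> 3 * x"
proof -
  have "{w \<in> space P. A w \<le> x} \<subseteq> box 1 (1/x) x \<union> (space P - box 1 x x)"
    using assms by (auto simp: box_def)
  then have "prob {w \<in> space P. A w \<le> x} \<le> prob (box 1 (1/x) x) + prob (space P - box 1 x x)"
    by (intro order_trans[OF finite_measure_mono measure_subadditive]) auto
  also have "prob (box 1 (1/x) x) \<le> x"
  proof -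
    have "prob (box 1 (1/x) x) \<le> exp (- (1/x))"
      using assms exponent_bounds(1)[of "1/x" x] by (simp add: prob_box)
    also have "\<dots> \<le> x" using exp_neg_le_inverse[of "1/x"] assms by simp
    finally show ?thesis .
  qed
  also have "prob (space P - box 1 x x) \<le> 2 * x"
  proof -
    have "prob (space P - box 1 x x) = 1 - exp (- exponent x x)"
      using assms by (simp add: prob_compl prob_box)
    also have "\<dots> \<le> exponent x x" by (rule one_minus_exp_neg_le)
    also have "\<dots> \<le> 2 * x" using exponent_bounds(2)[of x x] assms by simp
    finally show ?thesis .
  qed
  finally show ?thesis by simp
qed

lemma prob_A_gt: assumes "x > 0" shows "prob {w \<in> space P. A w > x} \<le> 2 / x"
proof -
  have "prob {w \<in> space P. A w > x} \<le> prob (space P - box x 1 1)"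
    by (intro finite_measure_mono) (auto simp: box_def)
  also have "\<dots> = 1 - exp (- (exponent 1 1 / x))"
    using assms by (simp add: prob_compl prob_box)
  also have "\<dots> \<le> exponent 1 1 / x" by (rule one_minus_exp_neg_le)
  also have "\<dots> \<le> 2 / x"
    using exponent_bounds(2)[of 1 1] assms by (simp add: divide_right_mono)
  finally show ?thesis .
qed

lemma AE_A_pos: "AE w in P. A w > 0"
proof -
  have "prob {w \<in> space P. A w \<le> 0} \<le> 0 + e" if "e > 0" for e
  proof -
    have "prob {w \<in> space P. A w \<le> 0} \<le> prob {w \<in> space P. A w \<le> e/3}"
      using that by (intro finite_measure_mono) auto
    also have "\<dots> \<le> e" using prob_A_le[of "e/3"] that by simp
    finally show ?thesis by simp
  qed
  then have "prob {w \<in> space P. A w \<le> 0} \<le> 0"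
    by (rule field_le_epsilon)
  then have "prob {w \<in> space P. A w \<le> 0} = 0"
    using measure_nonneg[of P] by (meson order.antisym)
  then show ?thesis
    by (intro AE_I'[where N = "{w \<in> space P. A w \<le> 0}"])
       (auto simp: null_sets_def emeasure_eq_measure)
qed

lemma AE_B_pos: "AE w in P. B w > 0"
  using spectral_pair.AE_A_pos[OF swap] .

text \<open>The event {A > t B} contains the disjoint shells
  box (\<epsilon> q^j) (1/q) t - box (\<epsilon> q^j) 1 t, j < m.\<close>
lemma prob_exceed_lower_grid:
  assumes t: "t > 0" and q: "q > 1" and \<epsilon>: "\<epsilon> > 0"
  shows "(exponent 1 t - exponent (1/q) t) / (exponent 1 t * (q - 1))
      * (exp (-(q * exponent 1 t / (\<epsilon> * q^m))) - exp (-(q * exponent 1 t / \<epsilon>)))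
    \<le> prob {w \<in> space P. A w > t * B w}"
proof -
  define E where "E j = box (\<epsilon> * q^j) (1/q) t - box (\<epsilon> * q^j) 1 t" for j
  have prob_E: "prob (E j) = exp (- (exponent (1/q) t / (\<epsilon> * q^j)))
      - exp (- (exponent 1 t / (\<epsilon> * q^j)))" for j
    unfolding E_def using t q \<epsilon> by (intro prob_box_diff) auto
  have E_iff: "w \<in> E j \<longleftrightarrow> w \<in> space P \<and> \<epsilon> * q^j < A w \<and> A w \<le> \<epsilon> * q^Suc j \<and> B w \<le> \<epsilon> * q^j / t"
      for w j
    by (auto simp: E_def box_def mult_ac)
  have "disjoint_family_on E {..<m}"
  proof -
    have "E i \<inter> E j = {}" if "i < j" for i j
    proof -
      have "\<epsilon> * q^Suc i \<le> \<epsilon> * q^j" using that \<epsilon> q by (intro mult_left_mono power_increasing) auto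
      then show ?thesis by (auto simp: E_iff)
    qed
    then show ?thesis
      unfolding disjoint_family_on_def by (metis Int_commute linorder_neqE_nat)
  qed
  moreover have "(\<Union>j<m. E j) \<subseteq> {w \<in> space P. A w > t * B w}"
    using t by (auto simp: E_iff field_simps)
  ultimately have "(\<Sum>j<m. prob (E j)) \<le> prob {w \<in> space P. A w > t * B w}"
    by (subst finite_measure_finite_Union[symmetric])
       (auto simp: E_def intro!: finite_measure_mono)
  moreover have "exponent (1/q) t \<le> exponent 1 t" using q by (intro exponent_mono) simp
  ultimately show ?thesis
    unfolding prob_E using sum_exp_diff_geometric_lower[OF exponent_pos[OF t] _ q \<epsilon>, of _ m]
    by (meson order_trans)
qed

lemma prob_exceed_lower:
  assumes t: "t > 0" and q: "q > 1"
  shows "tail_mass (q * t) / (q * exponent 1 t) \<le> prob {w \<in> space P. A w > t * B w}"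
proof -
  define b where "b = exponent 1 t"
  define K where "K = (b - exponent (1/q) t) / (b * (q - 1))"
  have b: "b > 0" using exponent_pos[OF t] by (simp add: b_def)
  have "tail_mass (q * t) / (q * b) = (1 - 1/q) * tail_mass (q * t) / (b * (q - 1))"
    using q b by (simp add: field_simps)
  also have "\<dots> \<le> K"
    unfolding K_def b_def using exponent_diff_lower[OF q, of t] b q
    by (intro divide_right_mono) (auto simp: b_def)
  also have "K \<le> prob {w \<in> space P. A w > t * B w}"
  proof (rule field_le_mult_one_interval)
    fix z :: real assume z: "0 < z" "z < 1"
    define d where "d = 1 - z"
    define \<epsilon> where "\<epsilon> = d / 2 * q * b"
    have d: "0 < d" "d < 1" and \<epsilon>: "\<epsilon> > 0" using z q b by (auto simp: d_def \<epsilon>_def)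
    obtain m where m: "2 * q * b / (\<epsilon> * d) < q ^ m" using real_arch_pow[OF q] by blast
    have "exp (-(q * b / \<epsilon>)) \<le> 1 / (q * b / \<epsilon>)"
      by (rule exp_neg_le_inverse) (use q b \<epsilon> in simp)
    also have "\<dots> = d / 2" using q b d by (simp add: \<epsilon>_def field_simps)
    finally have small: "exp (-(q * b / \<epsilon>)) \<le> d / 2" .
    have "q * b / (\<epsilon> * q^m) \<le> d / 2"
      using m \<epsilon> d q by (simp add: field_simps)
    then have large: "1 - d / 2 \<le> exp (-(q * b / (\<epsilon> * q^m)))"
      using one_minus_exp_neg_le[of "q * b / (\<epsilon> * q^m)"] by linarith
    have "K \<ge> 0" using exponent_mono[of "1/q" 1 t] b q by (simp add: K_def b_def)
    moreover have "z \<le> exp (-(q * b / (\<epsilon> * q^m))) - exp (-(q * b / \<epsilon>))"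
      using small large unfolding d_def by argo
    ultimately have "z * K \<le> K * (exp (-(q * b / (\<epsilon> * q^m))) - exp (-(q * b / \<epsilon>)))"
      by (simp add: mult.commute mult_left_mono)
    also have "\<dots> \<le> prob {w \<in> space P. A w > t * B w}"
      unfolding K_def b_def by (rule prob_exceed_lower_grid[OF t q \<epsilon>[unfolded b_def]])
    finally show "z * K \<le> prob {w \<in> space P. A w > t * B w}" .
  qed
  finally show ?thesis by (simp add: b_def)
qed

text \<open>Outside {A \<le> \<epsilon>} \<union> {A > \<epsilon> q^m}, the event {A > t B} is covered by the shells
  box (\<epsilon> q^(j+1)) 1 t - box (\<epsilon> q^(j+1)) q t, j < m.\<close>
lemma prob_exceed_upper_grid:
  assumes t: "t > 0" and q: "q > 1" and \<epsilon>: "\<epsilon> > 0"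
  shows "prob {w \<in> space P. A w > t * B w}
    \<le> (exponent q t - exponent 1 t) / exponent 1 t * (q / (q - 1)) + 3 * \<epsilon> + 2 / (\<epsilon> * q^m)"
proof -
  define F where "F j = box (\<epsilon> * q^Suc j) 1 t - box (\<epsilon> * q^Suc j) q t" for j
  have F_sets: "F j \<in> sets P" for j unfolding F_def by measurable
  have prob_F: "prob (F j) = exp (- (exponent 1 t / (\<epsilon> * q^Suc j)))
      - exp (- (exponent q t / (\<epsilon> * q^Suc j)))" for j
    unfolding F_def using t q \<epsilon> by (intro prob_box_diff) auto
  have cover: "{w \<in> space P. A w > t * B w}
      \<subseteq> ({w \<in> space P. A w \<le> \<epsilon>} \<union> {w \<in> space P. A w > \<epsilon> * q^m}) \<union> (\<Union>j<m. F j)"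
  proof (intro subsetI)
    fix w assume w: "w \<in> {w \<in> space P. A w > t * B w}"
    show "w \<in> ({w \<in> space P. A w \<le> \<epsilon>} \<union> {w \<in> space P. A w > \<epsilon> * q^m}) \<union> (\<Union>j<m. F j)"
    proof (cases "A w \<le> \<epsilon> \<or> A w > \<epsilon> * q^m")
      case False
      have "mono (\<lambda>j. \<epsilon> * q^j)" using \<epsilon> q by (intro monoI mult_left_mono power_increasing) auto
      then obtain j where j: "j < m" "\<epsilon> * q^j < A w" "A w \<le> \<epsilon> * q^Suc j"
        using mono_bracket[of "\<lambda>j. \<epsilon> * q^j" "A w" m] False by auto
      have "B w \<le> \<epsilon> * q^Suc j / t" using w j t by (simp add: field_simps)
      then have "w \<in> F j" using j w q by (auto simp: F_def box_def)
      then show ?thesis using j by auto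
    qed (use w in auto)
  qed
  have "prob {w \<in> space P. A w > t * B w}
      \<le> prob {w \<in> space P. A w \<le> \<epsilon>} + prob {w \<in> space P. A w > \<epsilon> * q^m} + (\<Sum>j<m. prob (F j))"
  proof -
    have "prob {w \<in> space P. A w > t * B w}
        \<le> prob ({w \<in> space P. A w \<le> \<epsilon>} \<union> {w \<in> space P. A w > \<epsilon> * q^m}) + prob (\<Union>j<m. F j)"
      using cover F_sets by (intro order_trans[OF finite_measure_mono measure_subadditive]) auto
    moreover have "prob ({w \<in> space P. A w \<le> \<epsilon>} \<union> {w \<in> space P. A w > \<epsilon> * q^m})
        \<le> prob {w \<in> space P. A w \<le> \<epsilon>} + prob {w \<in> space P. A w > \<epsilon> * q^m}"
      by (rule measure_subadditive) auto
    moreover have "prob (\<Union>j<m. F j) \<le> (\<Sum>j<m. prob (F j))"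
      using F_sets by (intro finite_measure_subadditive_finite) auto
    ultimately show ?thesis by linarith
  qed
  also have "(\<Sum>j<m. prob (F j)) \<le> (exponent q t - exponent 1 t) / exponent 1 t * (q / (q - 1))"
    unfolding prob_F using exponent_pos[OF t] q \<epsilon>
    by (intro sum_exp_diff_geometric_upper exponent_mono) auto
  also have "prob {w \<in> space P. A w \<le> \<epsilon>} \<le> 3 * \<epsilon>" by (rule prob_A_le[OF \<epsilon>])
  also have "prob {w \<in> space P. A w > \<epsilon> * q^m} \<le> 2 / (\<epsilon> * q^m)"
    by (rule prob_A_gt) (use \<epsilon> q in simp)
  finally show ?thesis by simp
qed

lemma prob_exceed_upper:
  assumes t: "t > 0" and q: "q > 1"
  shows "prob {w \<in> space P. A w > t * B w} \<le> q * tail_mass (t / q) / exponent 1 t"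
proof -
  define b where "b = exponent 1 t"
  define K where "K = (exponent q t - b) / b * (q / (q - 1))"
  have b: "b > 0" using exponent_pos[OF t] by (simp add: b_def)
  have "prob {w \<in> space P. A w > t * B w} \<le> K + e" if e: "e > 0" for e
  proof -
    define \<epsilon> where "\<epsilon> = e / 6"
    have \<epsilon>: "\<epsilon> > 0" using e by (simp add: \<epsilon>_def)
    obtain m where "4 / (\<epsilon> * e) < q ^ m" using real_arch_pow[OF q] by blast
    then have "2 / (\<epsilon> * q^m) \<le> e / 2" using \<epsilon> e q by (simp add: field_simps)
    then show ?thesis
      using prob_exceed_upper_grid[OF t q \<epsilon>, of m] by (simp add: K_def b_def \<epsilon>_def)
  qed
  then have "prob {w \<in> space P. A w > t * B w} \<le> K" by (rule field_le_epsilon)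
  also have "K \<le> (q - 1) * tail_mass (t / q) / b * (q / (q - 1))"
    unfolding K_def b_def using exponent_diff_upper[OF q, of t] b q
    by (intro mult_right_mono divide_right_mono) (auto simp: b_def)
  also have "\<dots> = q * tail_mass (t / q) / b" using q b by (simp add: field_simps)
  finally show ?thesis by (simp add: b_def)
qed

lemma prob_ratio_gt_eq:
  assumes "t \<ge> 0"
  shows "prob {w \<in> space P. A w / B w > t} = prob {w \<in> space P. A w > t * B w}"
proof (rule measure_eq_AE)
  show "AE w in P. (w \<in> {w \<in> space P. A w / B w > t}) = (w \<in> {w \<in> space P. A w > t * B w})"
    using AE_B_pos by eventually_elim (auto simp: pos_less_divide_eq)
qed auto

lemma prob_ratio_gt_bounds:
  assumes t: "t > 0" and q: "q > 1"
  shows "t * gamma_plus M f g (q * t) / exponent 1 t \<le> prob {w \<in> space P. A w / B w > t}"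
    and "prob {w \<in> space P. A w / B w > t} \<le> t * gamma_plus M f g (t / q) / exponent 1 t"
proof -
  have "t * gamma_plus M f g (q * t) / exponent 1 t = tail_mass (q * t) / (q * exponent 1 t)"
    using t q by (simp add: gamma_plus_eq field_simps)
  then show "t * gamma_plus M f g (q * t) / exponent 1 t \<le> prob {w \<in> space P. A w / B w > t}"
    using prob_exceed_lower[OF t q] prob_ratio_gt_eq[of t] t by linarith
  have "t * gamma_plus M f g (t / q) / exponent 1 t = q * tail_mass (t / q) / exponent 1 t"
    using t q by (simp add: gamma_plus_eq field_simps)
  then show "prob {w \<in> space P. A w / B w > t} \<le> t * gamma_plus M f g (t / q) / exponent 1 t"
    using prob_exceed_upper[OF t q] prob_ratio_gt_eq[of t] t by linarith
qed

end

section \<open>Regular variation along sequences\<close>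

lemma tendsto_squeeze_at_right_1:
  fixes u :: "nat \<Rightarrow> real" and lo hi :: "real \<Rightarrow> nat \<Rightarrow> real" and A B :: "real \<Rightarrow> real"
  assumes bounds: "\<And>q. q > 1 \<Longrightarrow> eventually (\<lambda>n. lo q n \<le> u n \<and> u n \<le> hi q n) sequentially"
    and lo: "\<And>q. q > 1 \<Longrightarrow> (lo q \<longlongrightarrow> A q) sequentially"
    and hi: "\<And>q. q > 1 \<Longrightarrow> (hi q \<longlongrightarrow> B q) sequentially"
    and A: "(A \<longlongrightarrow> L) (at_right 1)" and B: "(B \<longlongrightarrow> L) (at_right 1)"
  shows "(u \<longlongrightarrow> L) sequentially"
proof (rule tendstoI)
  fix e :: real assume e: "e > 0"
  have "eventually (\<lambda>q. dist (A q) L < e/2 \<and> dist (B q) L < e/2) (at_right 1)"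
    using tendstoD[OF A, of "e/2"] tendstoD[OF B, of "e/2"] e by (auto intro: eventually_conj)
  then obtain b where b: "b > 1" "\<And>y. y > 1 \<Longrightarrow> y < b \<Longrightarrow> dist (A y) L < e/2 \<and> dist (B y) L < e/2"
    unfolding eventually_at_right_field by blast
  define q where "q = (1 + b)/2"
  have q: "q > 1" "q < b" using b by (auto simp: q_def)
  from b(2)[OF q] have AB: "dist (A q) L < e/2" "dist (B q) L < e/2" by auto
  have "eventually (\<lambda>n. dist (lo q n) (A q) < e/2) sequentially"
    using tendstoD[OF lo[OF q(1)], of "e/2"] e by simp
  moreover have "eventually (\<lambda>n. dist (hi q n) (B q) < e/2) sequentially"
    using tendstoD[OF hi[OF q(1)], of "e/2"] e by simp
  ultimately show "eventually (\<lambda>n. dist (u n) L < e) sequentially"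
    using bounds[OF q(1)]
  proof eventually_elim
    case (elim n)
    then show ?case using AB unfolding dist_real_def abs_less_iff by linarith
  qed
qed

lemma tendsto_at_right_1_powr:
  fixes y a :: real assumes "y > 0"
  shows "((\<lambda>q. (q * y) powr a) \<longlongrightarrow> y powr a) (at_right 1)"
    and "((\<lambda>q. (y / q) powr a) \<longlongrightarrow> y powr a) (at_right 1)"
proof -
  have "((\<lambda>q. (q * y) powr a) \<longlongrightarrow> (1 * y) powr a) (at_right 1)"
    using assms by (intro tendsto_intros) auto
  then show "((\<lambda>q. (q * y) powr a) \<longlongrightarrow> y powr a) (at_right 1)" by simp
  have "((\<lambda>q. (y / q) powr a) \<longlongrightarrow> (y / 1) powr a) (at_right 1)"
    using assms by (intro tendsto_intros) auto
  then show "((\<lambda>q. (y / q) powr a) \<longlongrightarrow> y powr a) (at_right 1)" by simp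
qed

lemma regvar_along_sequence:
  assumes "regvar G r" "y > 0" "filterlim c at_top sequentially"
  shows "(\<lambda>n. G (c n * y) / G (c n)) \<longlonglongrightarrow> y powr r"
  using filterlim_compose[of "\<lambda>t. G (t * y) / G t"] assms unfolding regvar_def by blast

text \<open>N t is the last index n with \<kappa> n \<le> t.\<close>
lemma sequence_bracketing_index:
  fixes \<kappa> :: "nat \<Rightarrow> real"
  assumes "filterlim \<kappa> at_top sequentially"
  obtains N :: "real \<Rightarrow> nat"
  where "filterlim N at_top at_top" and "\<And>t. t \<ge> \<kappa> 0 \<Longrightarrow> \<kappa> (N t) \<le> t \<and> t < \<kappa> (Suc (N t))"
proof
  define N where "N t = Max {n. \<kappa> n \<le> t}" for t
  have fin: "finite {n. \<kappa> n \<le> t}" for t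
  proof -
    obtain N0 where "\<And>n. n \<ge> N0 \<Longrightarrow> t + 1 \<le> \<kappa> n"
      using assms by (auto simp: filterlim_at_top eventually_sequentially)
    then have "{n. \<kappa> n \<le> t} \<subseteq> {..<N0}" by (force simp: not_less[symmetric])
    then show ?thesis by (rule finite_subset) auto
  qed
  show "\<kappa> (N t) \<le> t \<and> t < \<kappa> (Suc (N t))" if "t \<ge> \<kappa> 0" for t
  proof
    have "{n. \<kappa> n \<le> t} \<noteq> {}" using that by auto
    then show "\<kappa> (N t) \<le> t" using Max_in[OF fin] by (simp add: N_def)
    show "t < \<kappa> (Suc (N t))"
    proof (rule ccontr)
      assume "\<not> t < \<kappa> (Suc (N t))"
      then have "Suc (N t) \<le> N t" unfolding N_def by (intro Max_ge[OF fin]) simp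
      then show False by simp
    qed
  qed
  show "filterlim N at_top at_top"
    unfolding filterlim_at_top
  proof
    fix m :: nat
    show "eventually (\<lambda>t. m \<le> N t) at_top"
      using eventually_ge_at_top[of "Max (\<kappa> ` {..m})"]
    proof eventually_elim
      case (elim t)
      then have "\<kappa> m \<le> t" using Max_ge[of "\<kappa> ` {..m}" "\<kappa> m"] by auto
      then show "m \<le> N t" unfolding N_def by (intro Max_ge[OF fin]) simp
    qed
  qed
qed

text \<open>Between \<kappa> n and \<kappa> (n + 1) the ratio G (t x) / G t is trapped between two ratios
  whose limits are both x powr (-a), since n G (\<kappa> n x) \<longrightarrow> x powr (-a) and n / (n + 1) \<longrightarrow> 1.\<close>
lemma regvar_of_sequence_limit:
  fixes G :: "real \<Rightarrow> real" and \<kappa> :: "nat \<Rightarrow> real"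
  assumes antimono: "\<And>s t. 0 < s \<Longrightarrow> s \<le> t \<Longrightarrow> G t \<le> G s"
    and pos: "\<And>t. t > 0 \<Longrightarrow> G t > 0"
    and \<kappa>: "filterlim \<kappa> at_top sequentially"
    and lim: "\<And>x. x > 0 \<Longrightarrow> (\<lambda>n. real n * G (\<kappa> n * x)) \<longlonglongrightarrow> x powr (-a)"
  shows "regvar G (-a)"
  unfolding regvar_def
proof (intro allI impI)
  fix x :: real assume x: "x > 0"
  obtain N where N: "filterlim N at_top at_top"
    and bracket: "\<And>t. t \<ge> \<kappa> 0 \<Longrightarrow> \<kappa> (N t) \<le> t \<and> t < \<kappa> (Suc (N t))"
    using sequence_bracketing_index[OF \<kappa>] by blast
  have cancel: "(n * a) / (m * b) * (m / n) = a / b" if "n \<noteq> 0" "m \<noteq> 0" for n m a b :: real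
    using that by (cases "b = 0") (simp_all add: field_simps)
  have Suc_ratio: "(\<lambda>n. real (Suc n) / real n) \<longlonglongrightarrow> 1"
  proof -
    have "(\<lambda>n. 1 + 1 / real n) \<longlonglongrightarrow> 1 + 0" by (intro tendsto_intros lim_1_over_n)
    moreover have "eventually (\<lambda>n. 1 + 1 / real n = real (Suc n) / real n) sequentially"
      using eventually_gt_at_top[of 0] by eventually_elim (simp add: field_simps)
    ultimately show ?thesis by (simp add: tendsto_cong)
  qed
  define U where "U n = G (\<kappa> n * x) / G (\<kappa> (Suc n))" for n
  define L where "L n = G (\<kappa> (Suc n) * x) / G (\<kappa> n)" for n
  have "(\<lambda>n. (real n * G (\<kappa> n * x)) / (real (Suc n) * G (\<kappa> (Suc n) * 1)) * (real (Suc n) / real n))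
      \<longlonglongrightarrow> x powr (-a) / 1 powr (-a) * 1"
    by (intro tendsto_intros lim x LIMSEQ_Suc[OF lim] Suc_ratio) auto
  moreover have "(\<lambda>n. (real (Suc n) * G (\<kappa> (Suc n) * x)) / (real n * G (\<kappa> n * 1))
      * inverse (real (Suc n) / real n))
      \<longlonglongrightarrow> x powr (-a) / 1 powr (-a) * inverse 1"
    by (intro tendsto_intros lim x LIMSEQ_Suc[OF lim[OF x]] Suc_ratio) auto
  moreover have "eventually (\<lambda>n. (real n * G (\<kappa> n * x)) / (real (Suc n) * G (\<kappa> (Suc n) * 1))
        * (real (Suc n) / real n) = U n
      \<and> (real (Suc n) * G (\<kappa> (Suc n) * x)) / (real n * G (\<kappa> n * 1))
        * inverse (real (Suc n) / real n) = L n) sequentially"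
    using eventually_gt_at_top[of 0]
    by eventually_elim (simp add: U_def L_def cancel inverse_eq_divide del: of_nat_Suc)
  ultimately have "U \<longlonglongrightarrow> x powr (-a)" "L \<longlonglongrightarrow> x powr (-a)"
    by (auto simp: tendsto_cong elim: Lim_transform_eventually eventually_mono)
  then have UN: "((\<lambda>t. U (N t)) \<longlongrightarrow> x powr (-a)) at_top"
    and LN: "((\<lambda>t. L (N t)) \<longlongrightarrow> x powr (-a)) at_top"
    by (auto intro: filterlim_compose[OF _ N])
  have "eventually (\<lambda>n. \<kappa> n > 0) sequentially"
    using \<kappa> by (simp add: filterlim_at_top_dense)
  then have "eventually (\<lambda>t. \<kappa> (N t) > 0) at_top"
    by (rule eventually_compose_filterlim[OF _ N])
  then have bounds: "eventually (\<lambda>t. L (N t) \<le> G (t * x) / G t \<and> G (t * x) / G t \<le> U (N t)) at_top"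
    using eventually_ge_at_top[of "\<kappa> 0"]
  proof eventually_elim
    case (elim t)
    let ?n = "N t"
    have k: "\<kappa> ?n \<le> t" "t < \<kappa> (Suc ?n)" "\<kappa> ?n > 0" using bracket elim by auto
    then have t: "t > 0" by linarith
    have "G (t * x) \<le> G (\<kappa> ?n * x)" "G (\<kappa> (Suc ?n)) \<le> G t"
      "G (\<kappa> (Suc ?n) * x) \<le> G (t * x)" "G t \<le> G (\<kappa> ?n)"
      using k t x by (auto intro!: antimono mult_right_mono)
    moreover have "G (\<kappa> (Suc ?n)) > 0" "G t > 0" "G (t * x) > 0" "G (\<kappa> (Suc ?n) * x) > 0"
      using pos t x k by auto
    ultimately show ?case unfolding U_def L_def by (auto intro: frac_le)
  qed
  show "((\<lambda>t. G (t * x) / G t) \<longlongrightarrow> x powr (-a)) at_top"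
    by (rule tendsto_sandwich[OF _ _ LN UN]) (use bounds in \<open>auto elim: eventually_mono\<close>)
qed

lemma geninv_bracket:
  fixes U :: "real \<Rightarrow> real"
  assumes mono: "\<And>s t. 0 < s \<Longrightarrow> s \<le> t \<Longrightarrow> U s \<le> U t"
    and nonempty: "s > 0" "U s \<ge> y" and pos: "geninv U y > 0" and q: "q > 1"
  shows "U (geninv U y / q) < y" and "y \<le> U (geninv U y * q)"
proof -
  define S where "S = {s. 0 < s \<and> U s \<ge> y}"
  have c: "geninv U y = Inf S" by (simp add: geninv_def S_def)
  have "S \<noteq> {}" using nonempty by (auto simp: S_def)
  have bdd: "bdd_below S" by (rule bdd_belowI[of _ 0]) (auto simp: S_def)
  have "geninv U y / q < geninv U y" using pos q by (simp add: divide_less_eq)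
  then have "geninv U y / q \<notin> S" using cInf_lower[OF _ bdd] c by force
  then show "U (geninv U y / q) < y" using pos q by (auto simp: S_def)
  have "Inf S < geninv U y * q" using pos q c by simp
  then obtain s where "s \<in> S" "s < geninv U y * q" using cInf_lessD[OF \<open>S \<noteq> {}\<close>] by blast
  then show "y \<le> U (geninv U y * q)" using mono[of s "geninv U y * q"] by (auto simp: S_def)
qed

lemma geninv_tendsto_at_top:
  fixes U :: "real \<Rightarrow> real"
  assumes mono: "\<And>s t. 0 < s \<Longrightarrow> s \<le> t \<Longrightarrow> U s \<le> U t"
    and above_id: "\<And>t. t > 0 \<Longrightarrow> t \<le> U t"
  shows "filterlim (\<lambda>n. geninv U (real n)) at_top sequentially"
  unfolding filterlim_at_top
proof
  fix Z :: real
  define Z' where "Z' = max Z 1"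
  obtain N :: nat where N: "U Z' < N" using reals_Archimedean2 by blast
  show "eventually (\<lambda>n. Z \<le> geninv U (real n)) sequentially"
    using eventually_ge_at_top[of "max N 1"]
  proof eventually_elim
    case (elim n)
    have mem: "real n \<in> {s. 0 < s \<and> U s \<ge> real n}" using elim above_id[of n] by auto
    then have "Z' \<le> Inf {s. 0 < s \<and> U s \<ge> real n}"
    proof (intro cInf_greatest)
      fix s assume s: "s \<in> {s. 0 < s \<and> U s \<ge> real n}"
      show "Z' \<le> s"
      proof (rule ccontr)
        assume "\<not> Z' \<le> s"
        then have "U s \<le> U Z'" using s by (intro mono) auto
        then show False using s N elim by auto
      qed
    qed (use mem in blast)
    then show ?case by (simp add: geninv_def Z'_def)
  qed
qed

text \<open>With c n = geninv (1 / G) n, the bracket 1 / G (c n / q) < n \<le> 1 / G (c n q) and regular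
  variation squeeze n G (c n) between q powr a and q powr (-a).\<close>
lemma regvar_geninv_reciprocal:
  fixes G :: "real \<Rightarrow> real"
  assumes antimono: "\<And>s t. 0 < s \<Longrightarrow> s \<le> t \<Longrightarrow> G t \<le> G s"
    and pos: "\<And>t. t > 0 \<Longrightarrow> G t > 0"
    and bound: "\<And>t. t > 0 \<Longrightarrow> G t \<le> 1 / t"
    and rv: "regvar G (-a)"
  defines "c \<equiv> \<lambda>n. geninv (\<lambda>t. 1 / G t) (real n)"
  shows "filterlim c at_top sequentially" and "(\<lambda>n. real n * G (c n)) \<longlonglongrightarrow> 1"
proof -
  have mono: "1 / G s \<le> 1 / G t" if "0 < s" "s \<le> t" for s t
    using antimono[OF that] pos that by (intro divide_left_mono) auto
  have above_id: "t \<le> 1 / G t" if "t > 0" for t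
    using bound[OF that] pos[OF that] that by (simp add: field_simps)
  show c_top: "filterlim c at_top sequentially"
    unfolding c_def by (rule geninv_tendsto_at_top[OF mono above_id])
  have c_pos: "eventually (\<lambda>n. c n > 0) sequentially"
    using c_top by (simp add: filterlim_at_top_dense)
  show "(\<lambda>n. real n * G (c n)) \<longlonglongrightarrow> 1"
  proof (rule tendsto_squeeze_at_right_1[where lo = "\<lambda>q n. G (c n) / G (c n / q)"
        and hi = "\<lambda>q n. G (c n) / G (c n * q)"
        and A = "\<lambda>q. 1 / ((1/q) powr (-a))" and B = "\<lambda>q. 1 / (q powr (-a))"])
    fix q :: real assume q: "q > 1"
    show "eventually (\<lambda>n. G (c n) / G (c n / q) \<le> real n * G (c n)
        \<and> real n * G (c n) \<le> G (c n) / G (c n * q)) sequentially"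
      using c_pos eventually_ge_at_top[of 1]
    proof eventually_elim
      case (elim n)
      note bracket = geninv_bracket[where U = "\<lambda>t. 1 / G t" and s = "real n" and y = "real n",
          OF mono _ _ _ q]
      have "1 / G (c n / q) < real n" "real n \<le> 1 / G (c n * q)"
        using bracket elim above_id[of n] by (auto simp: c_def)
      moreover have "G (c n) > 0" "G (c n / q) > 0" "G (c n * q) > 0" using pos elim q by auto
      ultimately show ?case by (simp add: field_simps)
    qed
    have "(\<lambda>n. G (c n * (1/q)) / G (c n)) \<longlonglongrightarrow> (1/q) powr (-a)"
      "(\<lambda>n. G (c n * q) / G (c n)) \<longlonglongrightarrow> q powr (-a)"
      using q by (intro regvar_along_sequence[OF rv _ c_top]; simp)+
    from this[THEN tendsto_inverse]
    show "(\<lambda>n. G (c n) / G (c n / q)) \<longlonglongrightarrow> 1 / ((1/q) powr (-a))"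
      and "(\<lambda>n. G (c n) / G (c n * q)) \<longlonglongrightarrow> 1 / (q powr (-a))"
      using q by (simp_all add: inverse_eq_divide)
  next
    have "((\<lambda>q. 1 / ((1/q) powr (-a))) \<longlongrightarrow> 1 / ((1/1) powr (-a))) (at_right 1)"
      "((\<lambda>q. 1 / (q powr (-a))) \<longlongrightarrow> 1 / (1 powr (-a))) (at_right 1)"
      by (intro tendsto_intros; simp)+
    then show "((\<lambda>q. 1 / ((1/q) powr (-a))) \<longlongrightarrow> 1) (at_right 1)"
      and "((\<lambda>q. 1 / (q powr (-a))) \<longlongrightarrow> 1) (at_right 1)" by simp_all
  qed
qed

lemma asymp_equiv_eventually_between:
  fixes \<kappa> c :: "nat \<Rightarrow> real"
  assumes equiv: "\<kappa> \<sim>[sequentially] c" and c_pos: "eventually (\<lambda>n. c n > 0) sequentially"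
    and q: "q > 1"
  shows "eventually (\<lambda>n. c n / q \<le> \<kappa> n \<and> \<kappa> n \<le> c n * q) sequentially"
proof -
  have "(\<lambda>n. \<kappa> n / c n) \<longlonglongrightarrow> 1"
    using c_pos by (intro asymp_equivD_strong[OF equiv]) (auto elim: eventually_mono)
  then have "eventually (\<lambda>n. \<kappa> n / c n \<in> {1/q<..<q}) sequentially"
    using q by (intro topological_tendstoD) auto
  then show ?thesis
    using c_pos by eventually_elim (auto simp: field_simps)
qed

lemma sequence_limit_transfer_asymp_equiv:
  fixes G :: "real \<Rightarrow> real" and c \<kappa> :: "nat \<Rightarrow> real"
  assumes antimono: "\<And>s t. 0 < s \<Longrightarrow> s \<le> t \<Longrightarrow> G t \<le> G s"
    and c_top: "filterlim c at_top sequentially"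
    and lim: "\<And>y. y > 0 \<Longrightarrow> (\<lambda>n. real n * G (c n * y)) \<longlonglongrightarrow> y powr (-a)"
    and equiv: "\<kappa> \<sim>[sequentially] c"
  shows "filterlim \<kappa> at_top sequentially"
    and "\<And>y. y > 0 \<Longrightarrow> (\<lambda>n. real n * G (\<kappa> n * y)) \<longlonglongrightarrow> y powr (-a)"
proof -
  have c_pos: "eventually (\<lambda>n. c n > 0) sequentially"
    using c_top by (simp add: filterlim_at_top_dense)
  note between = asymp_equiv_eventually_between[OF equiv c_pos]
  show "filterlim \<kappa> at_top sequentially"
    unfolding filterlim_at_top
  proof
    fix Z :: real
    show "eventually (\<lambda>n. Z \<le> \<kappa> n) sequentially"
      using between[of 2, simplified] c_top[unfolded filterlim_at_top, rule_format, of "2 * Z"]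
      by eventually_elim auto
  qed
  fix y :: real assume y: "y > 0"
  show "(\<lambda>n. real n * G (\<kappa> n * y)) \<longlonglongrightarrow> y powr (-a)"
  proof (rule tendsto_squeeze_at_right_1[where lo = "\<lambda>q n. real n * G (c n * (q * y))"
        and hi = "\<lambda>q n. real n * G (c n * (y / q))"
        and A = "\<lambda>q. (q * y) powr (-a)" and B = "\<lambda>q. (y / q) powr (-a)"])
    fix q :: real assume q: "q > 1"
    show "eventually (\<lambda>n. real n * G (c n * (q * y)) \<le> real n * G (\<kappa> n * y)
        \<and> real n * G (\<kappa> n * y) \<le> real n * G (c n * (y / q))) sequentially"
      using between[OF q] c_pos
    proof eventually_elim
      case (elim n)
      then have "\<kappa> n > 0" using q by (smt (verit) divide_pos_pos)
      then have "G (c n * (q * y)) \<le> G (\<kappa> n * y)"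
        using elim y by (intro antimono) (auto intro: mult_right_mono simp: mult.assoc[symmetric])
      moreover have "c n * (y / q) \<le> \<kappa> n * y"
        using elim y mult_right_mono[of "c n / q" "\<kappa> n" y] by (simp add: field_simps)
      then have "G (\<kappa> n * y) \<le> G (c n * (y / q))"
        using elim q y by (intro antimono) auto
      ultimately show ?case by (auto intro: mult_left_mono)
    qed
    show "(\<lambda>n. real n * G (c n * (q * y))) \<longlonglongrightarrow> (q * y) powr (-a)"
      "(\<lambda>n. real n * G (c n * (y / q))) \<longlonglongrightarrow> (y / q) powr (-a)"
      using q y by (intro lim; simp)+
  qed (use tendsto_at_right_1_powr[OF y] in auto)
qed

lemma regvar_sequence_limit:
  fixes G :: "real \<Rightarrow> real" and \<kappa> :: "nat \<Rightarrow> real"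
  assumes antimono: "\<And>s t. 0 < s \<Longrightarrow> s \<le> t \<Longrightarrow> G t \<le> G s"
    and pos: "\<And>t. t > 0 \<Longrightarrow> G t > 0"
    and bound: "\<And>t. t > 0 \<Longrightarrow> G t \<le> 1 / t"
    and rv: "regvar G (-a)"
    and equiv: "\<kappa> \<sim>[sequentially] (\<lambda>n. geninv (\<lambda>t. 1 / G t) (real n))"
  shows "filterlim \<kappa> at_top sequentially"
    and "\<And>y. y > 0 \<Longrightarrow> (\<lambda>n. real n * G (\<kappa> n * y)) \<longlonglongrightarrow> y powr (-a)"
proof -
  define c where "c n = geninv (\<lambda>t. 1 / G t) (real n)" for n
  have c_top: "filterlim c at_top sequentially" and nc: "(\<lambda>n. real n * G (c n)) \<longlonglongrightarrow> 1"
    using regvar_geninv_reciprocal[OF antimono pos bound rv] by (simp_all add: c_def[abs_def])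
  have "(\<lambda>n. real n * G (c n * y)) \<longlonglongrightarrow> y powr (-a)" if y: "y > 0" for y
  proof -
    have "(\<lambda>n. real n * G (c n) * (G (c n * y) / G (c n))) \<longlonglongrightarrow> 1 * y powr (-a)"
      by (intro tendsto_intros nc regvar_along_sequence[OF rv y c_top])
    moreover have "eventually (\<lambda>n. c n > 0) sequentially"
      using c_top by (simp add: filterlim_at_top_dense)
    then have "eventually (\<lambda>n. real n * G (c n) * (G (c n * y) / G (c n)) = real n * G (c n * y))
        sequentially"
      by eventually_elim (use pos in \<open>simp add: field_simps less_imp_neq[symmetric]\<close>)
    ultimately show ?thesis by (simp add: tendsto_cong)
  qed
  from sequence_limit_transfer_asymp_equiv[OF antimono c_top this equiv[folded c_def]]
  show "filterlim \<kappa> at_top sequentially"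
    and "\<And>y. y > 0 \<Longrightarrow> (\<lambda>n. real n * G (\<kappa> n * y)) \<longlonglongrightarrow> y powr (-a)"
    by blast+
qed

lemma ln_one_minus_le: fixes z :: real assumes "z < 1" shows "ln (1 - z) \<le> - z"
  using ln_le_minus_one[of "1 - z"] assms by simp

lemma ln_one_minus_ge: fixes z :: real assumes "0 \<le> z" "z < 1" shows "- z / (1 - z) \<le> ln (1 - z)"
proof -
  have "ln (1 / (1 - z)) \<le> 1 / (1 - z) - 1" using ln_le_minus_one[of "1 / (1 - z)"] assms by simp
  moreover have "ln (1 / (1 - z)) = - ln (1 - z)" using assms by (simp add: ln_div)
  moreover have "1 / (1 - z) - 1 = z / (1 - z)" using assms by (simp add: field_simps)
  ultimately have "- (z / (1 - z)) \<le> ln (1 - z)" by linarith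
  then show ?thesis by simp
qed

lemma tendsto_0_if_real_times_tendsto:
  fixes z :: "nat \<Rightarrow> real"
  assumes lim: "(\<lambda>n. real n * z n) \<longlonglongrightarrow> l" shows "z \<longlonglongrightarrow> 0"
proof -
  have "(\<lambda>n. (real n * z n) * inverse (real n)) \<longlonglongrightarrow> l * 0"
    by (intro tendsto_intros lim tendsto_inverse_0_at_top filterlim_real_sequentially)
  moreover have "eventually (\<lambda>n. (real n * z n) * inverse (real n) = z n) sequentially"
    using eventually_gt_at_top[of 0] by eventually_elim simp
  ultimately show ?thesis using Lim_transform_eventually by fastforce
qed

lemma tendsto_one_minus_power:
  fixes z :: "nat \<Rightarrow> real"
  assumes lim: "(\<lambda>n. real n * z n) \<longlonglongrightarrow> l" and nn: "eventually (\<lambda>n. 0 \<le> z n) sequentially"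
  shows "(\<lambda>n. (1 - z n) ^ n) \<longlonglongrightarrow> exp (- l)"
proof -
  have z0: "z \<longlonglongrightarrow> 0" by (rule tendsto_0_if_real_times_tendsto[OF lim])
  have small: "eventually (\<lambda>n. z n < 1/2) sequentially" using z0 by (intro order_tendstoD) auto
  have upper: "(\<lambda>n. real n * z n * (- 1)) \<longlonglongrightarrow> l * (- 1)" by (intro tendsto_intros lim)
  have lower: "(\<lambda>n. real n * z n * (- 1 / (1 - z n))) \<longlonglongrightarrow> l * (- 1 / (1 - 0))"
    by (intro tendsto_intros lim z0) auto
  have "(\<lambda>n. real n * ln (1 - z n)) \<longlonglongrightarrow> - l"
  proof (rule tendsto_sandwich[where f="\<lambda>n. real n * z n * (- 1 / (1 - z n))"
      and h="\<lambda>n. real n * z n * (- 1)"])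
    show "(\<lambda>n. real n * z n * (- 1 / (1 - z n))) \<longlonglongrightarrow> - l" using lower by simp
    show "(\<lambda>n. real n * z n * (- 1)) \<longlonglongrightarrow> - l" using upper by simp
    show "eventually (\<lambda>n. real n * z n * (- 1 / (1 - z n)) \<le> real n * ln (1 - z n)) sequentially"
      using nn small
    proof eventually_elim
      case (elim n)
      have "real n * (- z n / (1 - z n)) \<le> real n * ln (1 - z n)"
        using ln_one_minus_ge[of "z n"] elim by (intro mult_left_mono) auto
      moreover have "real n * z n * (- 1 / (1 - z n)) = real n * (- z n / (1 - z n))" by simp
      ultimately show ?case by linarith
    qed
    show "eventually (\<lambda>n. real n * ln (1 - z n) \<le> real n * z n * (- 1)) sequentially"
      using small
    proof eventually_elim
      case (elim n)
      have "real n * ln (1 - z n) \<le> real n * (- z n)"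
        using ln_one_minus_le[of "z n"] elim by (intro mult_left_mono) auto
      then show ?case by simp
    qed
  qed
  then have "(\<lambda>n. exp (real n * ln (1 - z n))) \<longlonglongrightarrow> exp (- l)" by (intro tendsto_intros)
  moreover have "eventually (\<lambda>n. exp (real n * ln (1 - z n)) = (1 - z n) ^ n) sequentially"
    using small by eventually_elim (simp add: ln_realpow[symmetric])
  ultimately show ?thesis using Lim_transform_eventually by fastforce
qed

lemma filterlim_times_const_at_top:
  fixes \<kappa> :: "nat \<Rightarrow> real"
  assumes "filterlim \<kappa> at_top sequentially" "c > 0"
  shows "filterlim (\<lambda>n. \<kappa> n * c) at_top sequentially"
  using filterlim_tendsto_pos_mult_at_top[OF tendsto_const[of c] assms(2) assms(1)]
  by (simp add: mult.commute)

context spectral_densities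
begin

lemma exponent_over_identity_sequence:
  assumes "filterlim \<kappa> at_top sequentially" "c > 0"
  shows "(\<lambda>n. exponent 1 (\<kappa> n * c) / (\<kappa> n * c)) \<longlonglongrightarrow> 1"
  using filterlim_compose[OF exponent_over_identity filterlim_times_const_at_top[OF assms]] by simp

lemma scale_tendsto_at_top_if_regvar:
  assumes "regvar (gamma_plus M f g) (-a)"
    and "\<kappa> \<sim>[sequentially] (\<lambda>n. geninv (\<lambda>t. 1 / gamma_plus M f g t) (real n))"
  shows "filterlim \<kappa> at_top sequentially"
  using regvar_sequence_limit(1)[OF gamma_plus_antimono gamma_plus_pos_if_regvar[OF assms(1)]
      gamma_plus_le assms] .

lemma scaled_gamma_plus_tendsto_0:
  assumes \<kappa>: "filterlim \<kappa> at_top sequentially" and y: "y > 0" and c: "c > 0"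
  shows "(\<lambda>n. \<kappa> n * c * gamma_plus M f g (\<kappa> n * y) / exponent 1 (\<kappa> n * c)) \<longlonglongrightarrow> 0"
proof (rule tendsto_sandwich[where f = "\<lambda>n. 0" and h = "\<lambda>n. inverse (\<kappa> n * y)"])
  have "eventually (\<lambda>n. 0 \<le> \<kappa> n * c * gamma_plus M f g (\<kappa> n * y) / exponent 1 (\<kappa> n * c)
      \<and> \<kappa> n * c * gamma_plus M f g (\<kappa> n * y) / exponent 1 (\<kappa> n * c) \<le> inverse (\<kappa> n * y))
          sequentially"
    using \<kappa> unfolding filterlim_at_top_dense
  proof (rule eventually_mono[OF spec[of _ 0]])
    fix n assume \<kappa>_n: "\<kappa> n > 0"
    then have t: "\<kappa> n * c > 0" "\<kappa> n * y > 0" using c y by auto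
    have "\<kappa> n * c / exponent 1 (\<kappa> n * c) \<le> 1"
      using exponent_bounds(1)[of 1 "\<kappa> n * c"] t by simp
    moreover have "0 \<le> gamma_plus M f g (\<kappa> n * y)" "gamma_plus M f g (\<kappa> n * y) \<le> inverse (\<kappa> n * y)"
      using gamma_plus_nonneg[OF t(2)] gamma_plus_le[OF t(2)] by (simp_all add: inverse_eq_divide)
    ultimately show "0 \<le> \<kappa> n * c * gamma_plus M f g (\<kappa> n * y) / exponent 1 (\<kappa> n * c)
        \<and> \<kappa> n * c * gamma_plus M f g (\<kappa> n * y) / exponent 1 (\<kappa> n * c) \<le> inverse (\<kappa> n * y)"
      using t \<kappa>_n c exponent_pos[OF t(1)]
          mult_mono[of "gamma_plus M f g (\<kappa> n * y)" "inverse (\<kappa> n * y)"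
          "\<kappa> n * c / exponent 1 (\<kappa> n * c)" 1]
      by (auto simp: mult_ac intro!: divide_nonneg_pos)
  qed
  then show "eventually (\<lambda>n. 0 \<le> \<kappa> n * c * gamma_plus M f g (\<kappa> n * y) / exponent 1 (\<kappa> n * c))
      sequentially"
    "eventually (\<lambda>n. \<kappa> n * c * gamma_plus M f g (\<kappa> n * y) / exponent 1 (\<kappa> n * c)
      \<le> inverse (\<kappa> n * y)) sequentially"
    by (auto elim: eventually_mono)
  show "(\<lambda>n. inverse (\<kappa> n * y)) \<longlonglongrightarrow> 0"
    by (rule tendsto_inverse_0_at_top[OF filterlim_times_const_at_top[OF \<kappa> y]])
qed simp

lemma scaled_gamma_plus_tendsto:
  assumes rv: "regvar (gamma_plus M f g) (-a)"
    and equiv: "\<kappa> \<sim>[sequentially] (\<lambda>n. geninv (\<lambda>t. 1 / gamma_plus M f g t) (real n))"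
    and y: "y > 0" and q: "q > 1"
  shows "(\<lambda>n. real n * ((\<kappa> n * y) * gamma_plus M f g (q * (\<kappa> n * y)) / exponent 1 (\<kappa> n * y)))
      \<longlonglongrightarrow> (q * y) powr (-a)"
    and "(\<lambda>n. real n * ((\<kappa> n * y) * gamma_plus M f g ((\<kappa> n * y) / q) / exponent 1 (\<kappa> n * y)))
      \<longlonglongrightarrow> (y / q) powr (-a)"
proof -
  note lim = regvar_sequence_limit(2)[OF gamma_plus_antimono gamma_plus_pos_if_regvar[OF rv]
      gamma_plus_le rv equiv]
  have "(\<lambda>n. (\<kappa> n * y) / exponent 1 (\<kappa> n * y)) \<longlonglongrightarrow> 1"
    using tendsto_inverse[OF
        exponent_over_identity_sequence[OF scale_tendsto_at_top_if_regvar[OF rv equiv] y]]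
    by (simp add: inverse_eq_divide)
  then have "(\<lambda>n. real n * gamma_plus M f g (\<kappa> n * (q * y)) * ((\<kappa> n * y) / exponent 1 (\<kappa> n * y)))
        \<longlonglongrightarrow> (q * y) powr (-a) * 1"
    and "(\<lambda>n. real n * gamma_plus M f g (\<kappa> n * (y / q)) * ((\<kappa> n * y) / exponent 1 (\<kappa> n * y)))
        \<longlonglongrightarrow> (y / q) powr (-a) * 1"
    using y q by (intro tendsto_intros lim; simp)+
  then show "(\<lambda>n. real n * ((\<kappa> n * y) * gamma_plus M f g (q * (\<kappa> n * y)) / exponent 1 (\<kappa> n * y)))
      \<longlonglongrightarrow> (q * y) powr (-a)"
    and "(\<lambda>n. real n * ((\<kappa> n * y) * gamma_plus M f g ((\<kappa> n * y) / q) / exponent 1 (\<kappa> n * y)))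
      \<longlonglongrightarrow> (y / q) powr (-a)"
    by (simp_all add: mult_ac)
qed

end

section \<open>Weak convergence in the plane\<close>

lemma Times_borel_sets:
  fixes A B :: "real set"
  assumes "A \<in> sets borel" "B \<in> sets borel" shows "A \<times> B \<in> sets (borel :: (real \<times> real) measure)"
  using pair_measureI[OF assms] by (metis borel_prod)

lemma measure_rectangle:
  fixes \<nu> :: "(real \<times> real) measure"
  assumes "prob_space \<nu>" "sets \<nu> = sets borel" "a \<le> b" "c \<le> d"
  shows "measure \<nu> ({a<..b} \<times> {c<..d}) = measure \<nu> ({..b} \<times> {..d}) - measure \<nu> ({..a} \<times> {..d})
            - measure \<nu> ({..b} \<times> {..c}) + measure \<nu> ({..a} \<times> {..c})"
proof -
  interpret prob_space \<nu> by fact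
  have S: "A \<times> B \<in> sets \<nu>" if "A \<in> sets borel" "B \<in> sets borel" for A B :: "real set"
    using assms(2) Times_borel_sets[OF that] by simp
  have strip: "measure \<nu> ({a<..b} \<times> {..y}) = measure \<nu> ({..b} \<times> {..y}) - measure \<nu> ({..a} \<times> {..y})"
      for y
  proof -
    have "{a<..b} \<times> {..y} = {..b} \<times> {..y} - {..a} \<times> {..y}" using assms(3) by auto
    moreover have "measure \<nu> ({..b} \<times> {..y} - {..a} \<times> {..y}) = measure \<nu> ({..b} \<times> {..y})
        - measure \<nu> ({..a} \<times> {..y})"
      using assms(3) by (intro finite_measure_Diff S) auto
    ultimately show ?thesis by simp
  qed
  have "{a<..b} \<times> {c<..d} = {a<..b} \<times> {..d} - {a<..b} \<times> {..c}" using assms(4) by auto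
  moreover have "measure \<nu> ({a<..b} \<times> {..d} - {a<..b} \<times> {..c}) = measure \<nu> ({a<..b} \<times> {..d})
      - measure \<nu> ({a<..b} \<times> {..c})"
    using assms(4) by (intro finite_measure_Diff S) auto
  ultimately show ?thesis using strip[of d] strip[of c] by simp
qed

lemma sum_indicator_intervals:
  fixes xs :: "nat \<Rightarrow> real" assumes "mono xs"
  shows "(\<Sum>j<N. indicator {xs j<..xs (Suc j)} t) = (indicator {xs 0<..xs N} t :: real)"
proof (induction N)
  case 0 then show ?case by simp
next
  case (Suc N)
  have "xs 0 \<le> xs N" "xs N \<le> xs (Suc N)" using assms by (auto simp: mono_def)
  then show ?case using Suc by (auto simp: indicator_def)
qed

lemma sum_indicator_grid:
  fixes xs :: "nat \<Rightarrow> real" assumes "mono xs"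
  shows "(\<Sum>p\<in>{..<N} \<times> {..<N}. indicator
      ({xs (fst p)<..xs (Suc (fst p))} \<times> {xs (snd p)<..xs (Suc (snd p))}) z)
    = (indicator ({xs 0<..xs N} \<times> {xs 0<..xs N}) z :: real)"
proof -
  have "(\<Sum>p\<in>{..<N} \<times> {..<N}.
        indicator ({xs (fst p)<..xs (Suc (fst p))} \<times> {xs (snd p)<..xs (Suc (snd p))}) z)
      = (\<Sum>j<N. \<Sum>k<N.
        indicator {xs j<..xs (Suc j)} (fst z) * indicator {xs k<..xs (Suc k)} (snd z) :: real)"
    unfolding indicator_times sum.cartesian_product
    by (intro sum.cong refl) (auto split: prod.splits)
  also have "\<dots> = (\<Sum>j<N. indicator {xs j<..xs (Suc j)} (fst z))
      * (\<Sum>k<N. indicator {xs k<..xs (Suc k)} (snd z))"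
    by (simp add: sum_product)
  finally show ?thesis
    unfolding sum_indicator_intervals[OF assms] by (simp add: indicator_times)
qed

lemma (in finite_measure) integral_sum_indicator:
  assumes "\<And>p. C p \<in> sets M"
  shows "(\<integral>z. (\<Sum>p\<in>I. v p * indicator (C p) z) \<partial>M) = (\<Sum>p\<in>I. v p * measure M (C p))"
proof -
  have "integrable M (indicator (C p) :: _ \<Rightarrow> real)" for p
    using assms by (intro integrable_real_indicator) (auto simp: emeasure_eq_measure)
  then show ?thesis
    using assms by (subst Bochner_Integration.integral_sum) (auto simp: sets.Int_space_eq2)
qed

lemma integral_diff_bound_outside:
  fixes \<nu> :: "(real \<times> real) measure" and h s :: "real \<times> real \<Rightarrow> real"
  assumes "prob_space \<nu>" "sets \<nu> = sets borel"
    and hm: "h \<in> borel_measurable borel" and sm: "s \<in> borel_measurable borel"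
    and hb: "\<And>z. \<bar>h z\<bar> \<le> K" and sb: "\<And>z. \<bar>s z\<bar> \<le> K'"
    and Bm: "B \<in> sets borel"
    and hs: "\<And>z. \<bar>h z - s z\<bar> \<le> \<epsilon> + K * (1 - indicator B z)"
  shows "\<bar>(\<integral>z. h z \<partial>\<nu>) - (\<integral>z. s z \<partial>\<nu>)\<bar> \<le> \<epsilon> + K * (1 - measure \<nu> B)"
proof -
  interpret prob_space \<nu> by fact
  have hm': "h \<in> borel_measurable \<nu>" by (subst measurable_cong_sets[OF assms(2) refl]) (rule hm)
  have sm': "s \<in> borel_measurable \<nu>" by (subst measurable_cong_sets[OF assms(2) refl]) (rule sm)
  have Bm': "B \<in> sets \<nu>" using Bm assms(2) by simp
  have ih: "integrable \<nu> h" by (rule integrable_const_bound[of _ K]) (use hb hm' in auto)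
  have iS: "integrable \<nu> s" by (rule integrable_const_bound[of _ K']) (use sb sm' in auto)
  have iB: "integrable \<nu> (\<lambda>z. \<epsilon> + K * (1 - indicator B z))"
    using Bm'
    by (intro Bochner_Integration.integrable_add integrable_const integrable_real_indicator
        Bochner_Integration.integrable_mult_right Bochner_Integration.integrable_diff)
       (auto simp: emeasure_eq_measure)
  have "\<bar>(\<integral>z. h z \<partial>\<nu>) - (\<integral>z. s z \<partial>\<nu>)\<bar> = \<bar>\<integral>z. h z - s z \<partial>\<nu>\<bar>"
    using ih iS by simp
  also have "\<dots> \<le> (\<integral>z. \<epsilon> + K * (1 - indicator B z) \<partial>\<nu>)"
    by (rule integral_abs_bound_integral[OF Bochner_Integration.integrable_diff[OF ih iS] iB hs])
  also have "\<dots> = \<epsilon> + K * (1 - measure \<nu> B)"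
  proof -
    have "(\<integral>z. \<epsilon> + K * (1 - indicator B z) \<partial>\<nu>) = \<epsilon> + K * (1 - (\<integral>z. indicator B z \<partial>\<nu>))"
      using Bm' prob_space by (simp add: emeasure_eq_measure)
    also have "(\<integral>z. indicator B z \<partial>\<nu>) = measure \<nu> B" using Bm' by (simp add: sets.Int_space_eq2)
    finally show ?thesis .
  qed
  finally show ?thesis .
qed

lemma step_function_approximation:
  fixes h :: "'a \<Rightarrow> real"
  assumes partition: "\<And>z. (\<Sum>p\<in>I. indicator (C p) z :: real) = indicator S z"
    and cells: "\<And>p. p \<in> I \<Longrightarrow> C p \<subseteq> S"
    and close: "\<And>p z. p \<in> I \<Longrightarrow> z \<in> C p \<Longrightarrow> \<bar>h z - v p\<bar> \<le> \<epsilon>"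
    and hK: "\<And>z. \<bar>h z\<bar> \<le> K" and \<epsilon>: "\<epsilon> \<ge> 0"
  shows "\<bar>h z - (\<Sum>p\<in>I. v p * indicator (C p) z)\<bar> \<le> \<epsilon> + K * (1 - indicator S z)"
proof (cases "z \<in> S")
  case True
  then have one: "(\<Sum>p\<in>I. indicator (C p) z :: real) = 1" using partition by simp
  have "\<bar>h z - (\<Sum>p\<in>I. v p * indicator (C p) z)\<bar> = \<bar>\<Sum>p\<in>I. (h z - v p) * indicator (C p) z\<bar>"
    using one by (simp add: algebra_simps sum_subtractf sum_distrib_left[symmetric])
  also have "\<dots> \<le> (\<Sum>p\<in>I. \<epsilon> * indicator (C p) z)"
  proof (intro order_trans[OF sum_abs sum_mono])
    fix p assume "p \<in> I"
    then show "\<bar>(h z - v p) * indicator (C p) z\<bar> \<le> \<epsilon> * indicator (C p) z"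
      using close[of p z] by (auto simp: indicator_def)
  qed
  also have "\<dots> = \<epsilon>" using one by (simp add: sum_distrib_left[symmetric])
  finally show ?thesis using True by simp
next
  case False
  then have "indicator (C p) z = (0::real)" if "p \<in> I" for p
    using cells[OF that] by (auto simp: indicator_def)
  then show ?thesis using False hK[of z] \<epsilon> by simp
qed

lemma uniform_grid:
  assumes R: "R > 0" and \<delta>: "\<delta> > 0"
  obtains xs :: "nat \<Rightarrow> real" and N :: nat
  where "mono xs" "xs 0 = -R" "xs N = R" "\<And>j. xs (Suc j) - xs j < \<delta>"
proof -
  obtain N :: nat where N: "2 * R / \<delta> < N" using reals_Archimedean2 by blast
  then have N_pos: "N > 0" using R \<delta> by (cases N) (auto simp: field_simps)
  define xs where "xs j = -R + real j * (2 * R / N)" for j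
  have "mono xs"
  proof (rule monoI)
    fix i j :: nat assume "i \<le> j"
    then have "real i * (2 * R / N) \<le> real j * (2 * R / N)" using R by (intro mult_right_mono) auto
    then show "xs i \<le> xs j" unfolding xs_def by simp
  qed
  moreover have "xs (Suc j) - xs j = 2 * R / N" for j
    by (simp add: xs_def algebra_simps add_divide_distrib)
  moreover have "2 * R / N < \<delta>" using N N_pos \<delta> by (simp add: field_simps)
  ultimately show ?thesis using that[of xs N] N_pos by (simp add: xs_def)
qed

text \<open>A continuous bounded function is approximated within \<epsilon> on the square (-R, R] \<times> (-R, R] by
  its values at the lower-left corners of a fine grid of half-open cells.\<close>
lemma rectangle_step_approximation:
  fixes h :: "real \<times> real \<Rightarrow> real"
  assumes hc: "continuous_on UNIV h" and hK: "\<And>z. \<bar>h z\<bar> \<le> K"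
    and R: "R > 0" and \<epsilon>: "\<epsilon> > 0"
  obtains I :: "(nat \<times> nat) set" and a b c d v :: "nat \<times> nat \<Rightarrow> real"
  where "finite I" "\<And>p. a p \<le> b p" "\<And>p. c p \<le> d p"
    and "\<And>z. \<bar>h z - (\<Sum>p\<in>I. v p * indicator ({a p<..b p} \<times> {c p<..d p}) z)\<bar>
      \<le> \<epsilon> + K * (1 - indicator ({-R<..R} \<times> {-R<..R}) z)"
proof -
  define S where "S = {-R..R} \<times> {-R..R}"
  have "uniformly_continuous_on S h"
    by (rule compact_uniformly_continuous[OF continuous_on_subset[OF hc]])
       (auto simp: S_def intro: compact_Times)
  then obtain \<delta> where \<delta>: "\<delta> > 0"
    and uc: "\<And>x x'. x \<in> S \<Longrightarrow> x' \<in> S \<Longrightarrow> dist x' x < \<delta> \<Longrightarrow> dist (h x') (h x) < \<epsilon>"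
    unfolding uniformly_continuous_on_def using \<epsilon> by metis
  have \<delta>_half: "\<delta> / 2 > 0" using \<delta> by simp
  obtain xs :: "nat \<Rightarrow> real" and N :: nat where xs_mono: "mono xs" and xs0: "xs 0 = -R"
      and xsN: "xs N = R"
    and step: "\<And>j. xs (Suc j) - xs j < \<delta> / 2"
    by (fact uniform_grid[OF R \<delta>_half])
  have xs_range: "xs j \<in> {-R..R}" if "j \<le> N" for j
    using monoD[OF xs_mono, of 0 j] monoD[OF xs_mono, of j N] that xs0 xsN by simp
  define I where "I = {..<N} \<times> {..<N}"
  define cell where "cell p = {xs (fst p)<..xs (Suc (fst p))} \<times> {xs (snd p)<..xs (Suc (snd p))}"
      for p
  define corner where "corner p = (xs (fst p), xs (snd p))" for p
  define box where "box = {-R<..R} \<times> {-R<..R}"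
  have cell_box: "cell p \<subseteq> box" if "p \<in> I" for p
    using xs_range[of "fst p"] xs_range[of "Suc (fst p)"] xs_range[of "snd p"]
        xs_range[of "Suc (snd p)"] that
    by (force simp: I_def cell_def box_def)
  have "\<bar>h z - h (corner p)\<bar> \<le> \<epsilon>" if "p \<in> I" "z \<in> cell p" for p z
  proof -
    obtain j k where p: "p = (j, k)" by (cases p)
    obtain z1 z2 where z: "z = (z1, z2)" by (cases z)
    have "dist z1 (xs j) < \<delta> / 2" "dist z2 (xs k) < \<delta> / 2"
      using that step[of j] step[of k] by (auto simp: p z cell_def dist_real_def)
    then have "dist z (corner p) < \<delta>"
      using sqrt_sum_squares_le_sum_abs[of "dist z1 (xs j)" "dist z2 (xs k)"]
      by (simp add: z p corner_def dist_Pair_Pair)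
    moreover have "corner p \<in> S" using xs_range that by (auto simp: S_def corner_def p I_def)
    moreover have "z \<in> S" using cell_box[OF that(1)] that(2) by (auto simp: S_def box_def)
    ultimately show ?thesis using uc by (fastforce simp: dist_real_def)
  qed
  moreover have "(\<Sum>p\<in>I. indicator (cell p) z :: real) = indicator box z" for z
    using sum_indicator_grid[OF xs_mono, where N = N and z = z]
    by (simp add: I_def cell_def box_def xs0 xsN)
  ultimately have "\<bar>h z - (\<Sum>p\<in>I. h (corner p) * indicator (cell p) z)\<bar> \<le> \<epsilon> + K
      * (1 - indicator box z)"
    for z using cell_box hK \<epsilon> by (intro step_function_approximation) auto
  then show ?thesis
    using that[of I "\<lambda>p. xs (fst p)" "\<lambda>p. xs (Suc (fst p))" "\<lambda>p. xs (snd p)" "\<lambda>p. xs (Suc (snd p))"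
        "\<lambda>p. h (corner p)"] monoD[OF xs_mono]
    by (simp add: I_def cell_def box_def)
qed

lemma measure_rectangle_tendsto:
  fixes \<mu> :: "nat \<Rightarrow> (real \<times> real) measure" and L :: "(real \<times> real) measure"
  assumes "\<And>n. prob_space (\<mu> n)" "\<And>n. sets (\<mu> n) = sets borel" "prob_space L" "sets L = sets borel"
    and cdf: "\<And>x y. (\<lambda>n. measure (\<mu> n) ({..x} \<times> {..y})) \<longlonglongrightarrow> measure L ({..x} \<times> {..y})"
    and "a \<le> b" "c \<le> d"
  shows "(\<lambda>n. measure (\<mu> n) ({a<..b} \<times> {c<..d})) \<longlonglongrightarrow> measure L ({a<..b} \<times> {c<..d})"
  unfolding measure_rectangle[OF assms(1,2,6,7)] measure_rectangle[OF assms(3,4,6,7)]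
  by (intro tendsto_intros cdf)

lemma prob_space_exists_large_square:
  fixes L :: "(real \<times> real) measure"
  assumes "prob_space L" "sets L = sets borel" "\<epsilon> > 0"
  obtains R where "R > 0" "measure L ({-R<..R} \<times> {-R<..R}) > 1 - \<epsilon>"
proof -
  interpret prob_space L by fact
  define sq where "sq n = {- real n<..real n} \<times> {- real n<..real n}" for n
  have "(\<lambda>n. measure L (sq n)) \<longlonglongrightarrow> measure L (\<Union>n. sq n)"
  proof (rule finite_Lim_measure_incseq)
    have "sq n \<in> sets borel" for n unfolding sq_def by (intro Times_borel_sets) auto
    then show "range sq \<subseteq> sets L" using assms(2) by auto
    show "incseq sq" unfolding sq_def by (intro monoI) auto
  qed
  moreover have "(\<Union>n. sq n) = space L"
  proof -
    have "(x, y) \<in> (\<Union>n. sq n)" for x y :: real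
    proof -
      obtain n :: nat where "max \<bar>x\<bar> \<bar>y\<bar> < n" using reals_Archimedean2 by blast
      then show ?thesis unfolding sq_def by (intro UN_I[of n]) auto
    qed
    then show ?thesis using sets_eq_imp_space_eq[OF assms(2)] by auto
  qed
  ultimately have "(\<lambda>n. measure L (sq n)) \<longlonglongrightarrow> 1" by (simp add: prob_space)
  then have "eventually (\<lambda>n. measure L (sq n) > 1 - \<epsilon>) sequentially"
    using assms(3) by (intro order_tendstoD) auto
  then obtain N where "\<And>n. n \<ge> N \<Longrightarrow> measure L (sq n) > 1 - \<epsilon>"
    by (auto simp: eventually_sequentially)
  then have "measure L (sq (Suc N)) > 1 - \<epsilon>" by simp
  then show ?thesis using that[of "real (Suc N)"] by (simp add: sq_def del: of_nat_Suc)
qed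

text \<open>The weak limit is tested on a step function over a fine grid of a square carrying
  almost all the mass of L; the mass of that square under \<mu> n converges to its L-mass.\<close>
lemma weak_conv_if_cdf_tendsto:
  fixes \<mu> :: "nat \<Rightarrow> (real \<times> real) measure" and L :: "(real \<times> real) measure"
  assumes \<mu>: "\<And>n. prob_space (\<mu> n)" "\<And>n. sets (\<mu> n) = sets borel"
    and L: "prob_space L" "sets L = sets borel"
    and cdf: "\<And>x y. (\<lambda>n. measure (\<mu> n) ({..x} \<times> {..y})) \<longlonglongrightarrow> measure L ({..x} \<times> {..y})"
  shows "weak_conv \<mu> L"
  unfolding weak_conv_def
proof (intro allI impI)
  fix h :: "real \<times> real \<Rightarrow> real" assume hc: "continuous_on UNIV h" and "bounded (range h)"
  then obtain K where K: "K > 0" "\<And>z. \<bar>h z\<bar> \<le> K" unfolding bounded_pos by auto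
  have h_borel: "h \<in> borel_measurable borel" using hc by (rule borel_measurable_continuous_onI)
  note rect_tendsto = measure_rectangle_tendsto[OF \<mu> L cdf]
  show "(\<lambda>n. \<integral>z. h z \<partial>\<mu> n) \<longlonglongrightarrow> (\<integral>z. h z \<partial>L)"
  proof (rule tendstoI)
    fix e :: real assume e: "e > 0"
    define \<epsilon> where "\<epsilon> = e / (4 * K + 4)"
    have \<epsilon>: "\<epsilon> > 0" using e K by (simp add: \<epsilon>_def)
    obtain R where R: "R > 0" and LR: "measure L ({-R<..R} \<times> {-R<..R}) > 1 - \<epsilon>"
      using prob_space_exists_large_square[OF L \<epsilon>] by blast
    obtain I :: "(nat \<times> nat) set" and a b c d v where I: "finite I" and ab: "\<And>p. a p \<le> b p"
        and cd: "\<And>p. c p \<le> d p"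
      and approx: "\<And>z. \<bar>h z - (\<Sum>p\<in>I. v p * indicator ({a p<..b p} \<times> {c p<..d p}) z)\<bar>
        \<le> \<epsilon> + K * (1 - indicator ({-R<..R} \<times> {-R<..R}) z)"
      by (fact rectangle_step_approximation[OF hc K(2) R \<epsilon>])
    define sq where "sq = {-R<..R} \<times> {-R<..R}"
    define cell where "cell p = {a p<..b p} \<times> {c p<..d p}" for p
    define s where "s z = (\<Sum>p\<in>I. v p * indicator (cell p) z)" for z
    have sq_sets: "sq \<in> sets borel" unfolding sq_def by (intro Times_borel_sets) auto
    have cell_sets: "cell p \<in> sets borel" for p unfolding cell_def by (intro Times_borel_sets) auto
    have s_borel: "s \<in> borel_measurable borel" unfolding s_def using cell_sets by measurable
    have s_bounded: "\<bar>s z\<bar> \<le> (\<Sum>p\<in>I. \<bar>v p\<bar>)" for z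
    proof -
      have "\<bar>s z\<bar> \<le> (\<Sum>p\<in>I. \<bar>v p * indicator (cell p) z\<bar>)" unfolding s_def by (rule sum_abs)
      also have "\<dots> \<le> (\<Sum>p\<in>I. \<bar>v p\<bar>)" by (intro sum_mono) (auto simp: indicator_def)
      finally show ?thesis .
    qed
    have hs: "\<bar>h z - s z\<bar> \<le> \<epsilon> + K * (1 - indicator sq z)" for z
      using approx[of z] by (simp add: s_def cell_def sq_def)
    have integral_s: "(\<integral>z. s z \<partial>\<nu>) = (\<Sum>p\<in>I. v p * measure \<nu> (cell p))"
      if "prob_space \<nu>" "sets \<nu> = sets borel" for \<nu>
      unfolding s_def using that cell_sets
      by (intro prob_space.finite_measure finite_measure.integral_sum_indicator) auto
    have "(\<lambda>n. \<Sum>p\<in>I. v p * measure (\<mu> n) (cell p)) \<longlonglongrightarrow> (\<Sum>p\<in>I. v p * measure L (cell p))"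
      unfolding cell_def by (intro tendsto_sum tendsto_mult_left rect_tendsto ab cd)
    then have "(\<lambda>n. \<integral>z. s z \<partial>\<mu> n) \<longlonglongrightarrow> (\<integral>z. s z \<partial>L)"
      by (simp add: integral_s[OF \<mu>] integral_s[OF L])
    then have "eventually (\<lambda>n. dist (\<integral>z. s z \<partial>\<mu> n) (\<integral>z. s z \<partial>L) < \<epsilon>) sequentially"
      using \<epsilon> by (rule tendstoD)
    moreover have "(\<lambda>n. measure (\<mu> n) sq) \<longlonglongrightarrow> measure L sq"
      unfolding sq_def using R by (intro rect_tendsto) auto
    then have "eventually (\<lambda>n. measure (\<mu> n) sq > 1 - 2 * \<epsilon>) sequentially"
      using LR \<epsilon> unfolding sq_def by (intro order_tendstoD(1)) auto
    ultimately show "eventually (\<lambda>n. dist (\<integral>z. h z \<partial>\<mu> n) (\<integral>z. h z \<partial>L) < e) sequentially"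
    proof eventually_elim
      case (elim n)
      note bound_outside =
          integral_diff_bound_outside[OF _ _ h_borel s_borel K(2) s_bounded sq_sets hs]
      have "\<bar>(\<integral>z. h z \<partial>\<mu> n) - (\<integral>z. s z \<partial>\<mu> n)\<bar> \<le> \<epsilon> + K * (1 - measure (\<mu> n) sq)"
        and "\<bar>(\<integral>z. h z \<partial>L) - (\<integral>z. s z \<partial>L)\<bar> \<le> \<epsilon> + K * (1 - measure L sq)"
        by (rule bound_outside[OF \<mu>] bound_outside[OF L])+
      moreover have "K * (1 - measure (\<mu> n) sq) \<le> K * (2 * \<epsilon>)" "K * (1 - measure L sq) \<le> K * \<epsilon>"
        using elim LR K unfolding sq_def by (simp_all add: mult_left_mono)
      moreover have "3 * \<epsilon> + 3 * K * \<epsilon> < e"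
      proof -
        have "(3 + 3 * K) * \<epsilon> < (4 * K + 4) * \<epsilon>" using \<epsilon> K by (intro mult_strict_right_mono) auto
        also have "\<dots> = e" using K by (simp add: \<epsilon>_def)
        finally show ?thesis by (simp add: algebra_simps)
      qed
      ultimately show ?case using elim by (simp add: dist_real_def)
    qed
  qed
qed

section \<open>Frechet laws\<close>

lemma sets_frechet: "sets (frechet a) = sets borel"
  by (simp add: frechet_def)

context
  fixes a :: real
  assumes apos: "a > 0"
begin

lemma frechet_cdf_mono: "x \<le> y \<Longrightarrow> frechet_cdf a x \<le> frechet_cdf a y"
proof (cases "x > 0")
  case True
  assume xy: "x \<le> y"
  have "y powr (-a) \<le> x powr (-a)" using powr_mono2'[of "-a" x y] apos True xy by simp
  then show ?thesis using True xy by (simp add: frechet_cdf_def)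
next
  case False
  then show "frechet_cdf a x \<le> frechet_cdf a y" by (simp add: frechet_cdf_def)
qed

lemma isCont_frechet_cdf: assumes "t > 0" shows "isCont (frechet_cdf a) t"
proof -
  have "eventually (\<lambda>x. x > 0) (nhds t)" using eventually_nhds_in_open[of "{0<..}" t] assms by simp
  then have "eventually (\<lambda>x. frechet_cdf a x = exp (- (x powr (-a)))) (nhds t)"
    by eventually_elim (simp add: frechet_cdf_def)
  moreover have "isCont (\<lambda>x. exp (- (x powr (-a)))) t" using assms by (intro continuous_intros) auto
  ultimately show ?thesis using isCont_cong[of "frechet_cdf a" "\<lambda>x. exp (- (x powr (-a)))" t]
    by simp
qed

lemma tendsto_frechet_at_right_0: "((\<lambda>t. exp (- (t powr (-a)))) \<longlongrightarrow> 0) (at_right 0)"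
proof -
  have "((\<lambda>t::real. t powr a) \<longlongrightarrow> 0) (at_right 0)"
  proof (rule tendsto_zero_powrI[where b=a])
    show "eventually (\<lambda>t::real. 0 \<le> t) (at_right 0)" using eventually_at_right_less[of 0]
      by (auto elim: eventually_mono)
  qed (auto simp: apos intro: tendsto_ident_at)
  moreover have "eventually (\<lambda>t::real. 0 < t powr a) (at_right 0)"
    using eventually_at_right_less[of 0] by (auto elim: eventually_mono)
  ultimately have f1: "LIM t at_right 0. inverse (t powr a) :> at_top"
    by (rule filterlim_inverse_at_top)
  have ev1: "eventually (\<lambda>t::real. inverse (t powr a) = t powr (-a)) (at_right 0)"
    by (simp add: powr_minus)
  have "LIM t at_right 0. t powr (-a) :> at_top" using filterlim_cong[OF refl refl ev1] f1 by simp
  then have "LIM t at_right 0. - (t powr (-a)) :> at_bot" by (simp add: filterlim_uminus_at_bot)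
  then show ?thesis by (rule filterlim_compose[OF exp_at_bot])
qed

lemma continuous_at_right_frechet_cdf: "continuous (at_right t) (frechet_cdf a)"
proof (cases "t > 0")
  case True then show ?thesis using isCont_frechet_cdf continuous_at_split by blast
next
  case False
  show ?thesis
  proof (cases "t = 0")
    case True
    have "((frechet_cdf a) \<longlongrightarrow> 0) (at_right 0)"
    proof (rule Lim_transform_eventually[OF tendsto_frechet_at_right_0])
      show "eventually (\<lambda>x. exp (- (x powr (-a))) = frechet_cdf a x) (at_right 0)"
        by (simp add: eventually_at_right_less frechet_cdf_def)
    qed
    then show ?thesis using True by (simp add: continuous_within frechet_cdf_def)
  next
    case False
    with \<open>\<not> t > 0\<close> have tn: "t < 0" by simp
    have "eventually (\<lambda>x. x < 0) (nhds t)" using eventually_nhds_in_open[of "{..<0}" t] tn by simp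
    then have "eventually (\<lambda>x. frechet_cdf a x = 0) (nhds t)"
      by eventually_elim (simp add: frechet_cdf_def)
    then have "isCont (frechet_cdf a) t" using isCont_cong[of "frechet_cdf a" "\<lambda>_. 0" t] by simp
    then show ?thesis using continuous_at_split by blast
  qed
qed

lemma frechet_cdf_at_bot: "((frechet_cdf a) \<longlongrightarrow> 0) at_bot"
proof (rule tendsto_eventually)
  show "eventually (\<lambda>x. frechet_cdf a x = 0) at_bot"
    using eventually_le_at_bot[of 0] by eventually_elim (simp add: frechet_cdf_def)
qed

lemma frechet_cdf_at_top: "((frechet_cdf a) \<longlongrightarrow> 1) at_top"
proof -
  have "((\<lambda>t::real. t powr (-a)) \<longlongrightarrow> 0) at_top" using apos
    by (intro tendsto_neg_powr filterlim_ident) auto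
  then have "((\<lambda>t::real. exp (- (t powr (-a)))) \<longlongrightarrow> exp (- 0)) at_top" by (intro tendsto_intros)
  moreover have "eventually (\<lambda>t. exp (- (t powr (-a))) = frechet_cdf a t) at_top"
    using eventually_gt_at_top[of 0] by eventually_elim (simp add: frechet_cdf_def)
  ultimately show ?thesis by (simp add: tendsto_cong)
qed

lemma real_distribution_frechet: "real_distribution (frechet a)"
  unfolding frechet_def
  by (rule real_distribution_interval_measure)
      (auto intro: frechet_cdf_mono continuous_at_right_frechet_cdf frechet_cdf_at_bot
          frechet_cdf_at_top)

lemma measure_frechet_atMost: "measure (frechet a) {..x} = frechet_cdf a x"
  unfolding frechet_def
  by (rule measure_interval_measure_Iic)
      (auto intro: frechet_cdf_mono continuous_at_right_frechet_cdf frechet_cdf_at_bot)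

end

lemma cdf_frechet: "a > 0 \<Longrightarrow> cdf (frechet a) = frechet_cdf a"
  by (rule ext) (simp add: cdf_def2 measure_frechet_atMost)

lemma distr_pair_snd_prob_space:
  assumes "prob_space N" "prob_space M"
  shows "distr (N \<Otimes>\<^sub>M M) M snd = M"
proof (intro measure_eqI)
  interpret N: prob_space N by fact
  interpret M: prob_space M by fact
  fix A assume A: "A \<in> sets (distr (N \<Otimes>\<^sub>M M) M snd)"
  from A have "emeasure (distr (N \<Otimes>\<^sub>M M) M snd) A = emeasure (N \<Otimes>\<^sub>M M) (space N \<times> A)"
    by (auto simp add: emeasure_distr space_pair_measure dest: sets.sets_into_space intro!:
        arg_cong2[where f=emeasure])
  with A show "emeasure (distr (N \<Otimes>\<^sub>M M) M snd) A = emeasure M A"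
    by (simp add: M.emeasure_pair_measure_Times N.emeasure_space_1)
qed simp

lemma frechet_pair:
  assumes a: "a > 0" and b: "b > 0"
  shows "prob_space (frechet a \<Otimes>\<^sub>M frechet b)"
    and "sets (frechet a \<Otimes>\<^sub>M frechet b) = sets (borel :: (real \<times> real) measure)"
    and "measure (frechet a \<Otimes>\<^sub>M frechet b) ({..x} \<times> {..y}) = frechet_cdf a x * frechet_cdf b y"
    and "distr (frechet a \<Otimes>\<^sub>M frechet b) borel fst = frechet a"
    and "distr (frechet a \<Otimes>\<^sub>M frechet b) borel snd = frechet b"
proof -
  interpret A: real_distribution "frechet a" by (rule real_distribution_frechet[OF a])
  interpret B: real_distribution "frechet b" by (rule real_distribution_frechet[OF b])
  interpret AB: pair_prob_space "frechet a" "frechet b" by unfold_locales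
  show "prob_space (frechet a \<Otimes>\<^sub>M frechet b)" by unfold_locales
  have "sets (frechet a \<Otimes>\<^sub>M frechet b) = sets (borel \<Otimes>\<^sub>M borel)"
    by (rule sets_pair_measure_cong) (simp_all add: sets_frechet)
  then show "sets (frechet a \<Otimes>\<^sub>M frechet b) = sets (borel :: (real \<times> real) measure)"
    by (metis borel_prod)
  have "emeasure (frechet a \<Otimes>\<^sub>M frechet b) ({..x} \<times> {..y})
      = emeasure (frechet a) {..x} * emeasure (frechet b) {..y}"
    by (rule B.emeasure_pair_measure_Times) (simp_all add: sets_frechet)
  then have "ennreal (measure (frechet a \<Otimes>\<^sub>M frechet b) ({..x} \<times> {..y}))
      = ennreal (frechet_cdf a x * frechet_cdf b y)"
    by (simp add: A.emeasure_eq_measure B.emeasure_eq_measure AB.P.emeasure_eq_measure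
        ennreal_mult[symmetric] measure_frechet_atMost a b frechet_cdf_def)
  moreover have "frechet_cdf a x * frechet_cdf b y \<ge> 0" by (simp add: frechet_cdf_def)
  ultimately show "measure (frechet a \<Otimes>\<^sub>M frechet b) ({..x} \<times> {..y}) = frechet_cdf a x
      * frechet_cdf b y"
    by simp
  have "distr (frechet a \<Otimes>\<^sub>M frechet b) borel fst = distr (frechet a \<Otimes>\<^sub>M frechet b) (frechet a) fst"
    by (rule distr_cong) (simp_all add: sets_frechet)
  also have "\<dots> = frechet a" by (rule B.distr_pair_fst)
  finally show "distr (frechet a \<Otimes>\<^sub>M frechet b) borel fst = frechet a" .
  have "distr (frechet a \<Otimes>\<^sub>M frechet b) borel snd = distr (frechet a \<Otimes>\<^sub>M frechet b) (frechet b) snd"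
    by (rule distr_cong) (simp_all add: sets_frechet)
  also have "\<dots> = frechet b" by (rule distr_pair_snd_prob_space) unfold_locales
  finally show "distr (frechet a \<Otimes>\<^sub>M frechet b) borel snd = frechet b" .
qed

lemma weak_conv_image_cdf_tendsto:
  fixes \<mu> :: "nat \<Rightarrow> (real \<times> real) measure" and L :: "(real \<times> real) measure"
      and p :: "real \<times> real \<Rightarrow> real"
  assumes wc: "weak_conv \<mu> L" and \<mu>p: "\<And>n. prob_space (\<mu> n)" and \<mu>s: "\<And>n. sets (\<mu> n) = sets borel"
    and Lp: "prob_space L" and Ls: "sets L = sets borel"
    and pc: "continuous_on UNIV p"
    and F: "distr L borel p = F1" and Fd: "real_distribution F1"
    and c: "isCont (cdf F1) x"
  shows "(\<lambda>n. measure (\<mu> n) {z. p z \<le> x}) \<longlonglongrightarrow> cdf F1 x"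
proof -
  have pm: "p \<in> borel_measurable borel" using pc by (rule borel_measurable_continuous_onI)
  have pmn: "p \<in> measurable (\<mu> n) borel" for n by (subst measurable_cong_sets[OF \<mu>s refl]) (rule pm)
  have pmL: "p \<in> measurable L borel" by (subst measurable_cong_sets[OF Ls refl]) (rule pm)
  have rd: "real_distribution (distr (\<mu> n) borel p)" for n
  proof -
    interpret prob_space "\<mu> n" by (rule \<mu>p)
    show ?thesis unfolding real_distribution_def real_distribution_axioms_def
      using prob_space_distr[OF pmn] by simp
  qed
  have "Weak_Convergence.weak_conv_m (\<lambda>n. distr (\<mu> n) borel p) F1"
  proof (rule integral_bdd_continuous_conv_imp_weak_conv[OF rd Fd])
    fix \<phi> :: "real \<Rightarrow> real" assume \<phi>c: "\<And>x. isCont \<phi> x" and \<phi>b: "\<And>x. \<bar>\<phi> x\<bar> \<le> 1"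
    have \<phi>m: "\<phi> \<in> borel_measurable borel"
      using \<phi>c by (intro borel_measurable_continuous_onI continuous_at_imp_continuous_on) auto
    have "continuous_on UNIV (\<lambda>z. \<phi> (p z))"
      using \<phi>c pc
      by (intro continuous_on_compose2[OF _ pc, of UNIV])
          (auto intro: continuous_at_imp_continuous_on)
    moreover have "bounded (range (\<lambda>z. \<phi> (p z)))"
      using \<phi>b by (intro boundedI[of _ 1]) auto
    ultimately have "(\<lambda>n. \<integral>z. \<phi> (p z) \<partial>\<mu> n) \<longlonglongrightarrow> (\<integral>z. \<phi> (p z) \<partial>L)"
      using wc unfolding weak_conv_def by blast
    moreover have "(\<integral>z. \<phi> (p z) \<partial>\<mu> n) = integral\<^sup>L (distr (\<mu> n) borel p) \<phi>" for n
      by (rule integral_distr[symmetric, OF pmn \<phi>m])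
    moreover have "(\<integral>z. \<phi> (p z) \<partial>L) = integral\<^sup>L F1 \<phi>"
      unfolding F[symmetric] by (rule integral_distr[symmetric, OF pmL \<phi>m])
    ultimately show "(\<lambda>n. integral\<^sup>L (distr (\<mu> n) borel p) \<phi>) \<longlonglongrightarrow> integral\<^sup>L F1 \<phi>" by simp
  qed
  then have "(\<lambda>n. cdf (distr (\<mu> n) borel p) x) \<longlonglongrightarrow> cdf F1 x"
    using c unfolding Weak_Convergence.weak_conv_m_def Weak_Convergence.weak_conv_def by blast
  moreover have "cdf (distr (\<mu> n) borel p) x = measure (\<mu> n) {z. p z \<le> x}" for n
  proof -
    have sp: "space (\<mu> n) = UNIV" using sets_eq_imp_space_eq[OF \<mu>s[of n]] by simp
    show ?thesis unfolding cdf_def2 using pmn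
      by (subst measure_distr) (auto simp: sp vimage_def)
  qed
  ultimately show ?thesis by simp
qed

section \<open>Maxima of the ratios\<close>

locale spectral_sequence = spectral_densities M f g + prob_space P
  for M :: "'a measure" and f g and P :: "'w measure" +
  fixes A B :: "nat \<Rightarrow> 'w \<Rightarrow> real"
  assumes A_measurable: "\<And>i. i \<ge> 1 \<Longrightarrow> A i \<in> borel_measurable P"
    and B_measurable: "\<And>i. i \<ge> 1 \<Longrightarrow> B i \<in> borel_measurable P"
    and joint_cdf: "\<And>i x y. i \<ge> 1 \<Longrightarrow> x > 0 \<Longrightarrow> y > 0 \<Longrightarrow>
      prob {w \<in> space P. A i w \<le> x \<and> B i w \<le> y} = exp (- (\<integral>s. max (f s / x) (g s / y) \<partial>M))"
    and indep: "indep_vars (\<lambda>_. borel) (\<lambda>i w. (A i w, B i w)) {1..}"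
begin

lemma spectral_pair: "i \<ge> 1 \<Longrightarrow> spectral_pair M f g P (A i) (B i)"
  using spectral_densities_axioms prob_space_axioms A_measurable B_measurable joint_cdf
  by (simp add: spectral_pair_def spectral_pair_axioms_def)

lemma swap: "spectral_sequence M g f P B A"
proof -
  have "(\<lambda>z. (snd z, fst z)) \<in> measurable borel (borel :: (real \<times> real) measure)"
    by (intro borel_measurable_continuous_onI continuous_intros)
  then have "indep_vars (\<lambda>_. borel) (\<lambda>i w. (\<lambda>z. (snd z, fst z)) (A i w, B i w)) {1..}"
    by (rule indep_vars_compose2[OF indep])
  then show ?thesis
    using spectral_densities_axioms prob_space_axioms A_measurable B_measurable joint_cdf
    by (auto simp: spectral_sequence_def spectral_sequence_axioms_def spectral_densities_swap
        max.commute conj_commute)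
qed

lemma ratio_measurable[measurable]: "i \<ge> 1 \<Longrightarrow> (\<lambda>w. A i w / B i w) \<in> borel_measurable P"
  using A_measurable B_measurable by measurable

lemma AE_ratio_pos:
  assumes "i \<ge> 1" shows "AE w in P. A i w / B i w > 0"
proof -
  interpret spectral_pair M f g P "A i" "B i" by (rule spectral_pair[OF assms])
  show ?thesis using AE_A_pos AE_B_pos by eventually_elim simp
qed

definition exceedance :: "nat \<Rightarrow> real \<Rightarrow> real" where
  "exceedance i s = prob {w \<in> space P. A i w / B i w > s}"

lemma exceedance_bounds:
  assumes "i \<ge> 1" "s > 0" "q > 1"
  shows "s * gamma_plus M f g (q * s) / exponent 1 s \<le> exceedance i s"
    and "exceedance i s \<le> s * gamma_plus M f g (s / q) / exponent 1 s"
  using spectral_pair.prob_ratio_gt_bounds[OF spectral_pair[OF assms(1)] assms(2,3)]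
  by (simp_all add: exceedance_def)

lemma exceedance_ge_tail_mass:
  assumes "i \<ge> 1" "s > 0" "q > 1"
  shows "tail_mass (q * s) / (q * exponent 1 s) \<le> exceedance i s"
  using spectral_pair.prob_exceed_lower[OF spectral_pair[OF assms(1)] assms(2,3)]
    spectral_pair.prob_ratio_gt_eq[OF spectral_pair[OF assms(1)], of s] assms
  by (simp add: exceedance_def)

lemma prob_INTER_pairs:
  assumes "n \<ge> 1" and S: "S \<in> sets (borel :: (real \<times> real) measure)"
  shows "prob (\<Inter>i\<in>{1..n}. {w \<in> space P. (A i w, B i w) \<in> S})
    = (\<Prod>i\<in>{1..n}. prob {w \<in> space P. (A i w, B i w) \<in> S})"
proof -
  have "indep_sets (\<lambda>i. {(\<lambda>w. (A i w, B i w)) -` T \<inter> space P | T. T \<in> sets borel}) {1..}"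
    using indep unfolding indep_vars_def2 by simp
  then have "prob (\<Inter>i\<in>{1..n}. (\<lambda>w. (A i w, B i w)) -` S \<inter> space P)
      = (\<Prod>i\<in>{1..n}. prob ((\<lambda>w. (A i w, B i w)) -` S \<inter> space P))"
    by (rule indep_setsD) (use assms in auto)
  moreover have "{w \<in> space P. (A i w, B i w) \<in> S} = (\<lambda>w. (A i w, B i w)) -` S \<inter> space P" for i
    by auto
  ultimately show ?thesis by simp
qed

definition max_ratio :: "nat \<Rightarrow> 'w \<Rightarrow> real" where
  "max_ratio n w = Max ((\<lambda>i. A i w / B i w) ` {1..n})"

lemma max_ratio_measurable[measurable]: "max_ratio n \<in> borel_measurable P"
  unfolding max_ratio_def by (rule borel_measurable_Max) auto

lemma AE_max_ratio_pos:
  assumes "n \<ge> 1" shows "AE w in P. max_ratio n w > 0"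
  using AE_ratio_pos[of 1, OF order.refl]
proof eventually_elim
  case (elim w)
  moreover have "A 1 w / B 1 w \<le> max_ratio n w" unfolding max_ratio_def using assms
    by (intro Max_ge) auto
  ultimately show ?case by linarith
qed

definition max_ratio_cdf :: "(nat \<Rightarrow> real) \<Rightarrow> nat \<Rightarrow> real \<Rightarrow> real" where
  "max_ratio_cdf \<kappa> n y = prob {w \<in> space P. max_ratio n w / \<kappa> n \<le> y}"

lemma max_ratio_cdf_eq_prod:
  assumes n: "n \<ge> 1" and \<kappa>: "\<kappa> n > 0"
  shows "max_ratio_cdf \<kappa> n y = (\<Prod>i\<in>{1..n}. 1 - exceedance i (\<kappa> n * y))"
proof -
  define S where "S = {z :: real \<times> real. fst z / snd z \<le> \<kappa> n * y}"
  have "(\<lambda>z::real \<times> real. fst z / snd z) \<in> borel_measurable borel"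
    by (intro borel_measurable_divide borel_measurable_continuous_onI continuous_intros)
  then have S_sets: "S \<in> sets borel"
    using measurable_sets[of _ borel borel "{..\<kappa> n * y}"] by (simp add: S_def vimage_def)
  have "{w \<in> space P. max_ratio n w / \<kappa> n \<le> y} = (\<Inter>i\<in>{1..n}. {w \<in> space P. (A i w, B i w) \<in> S})"
    using n \<kappa> by (auto simp: max_ratio_def S_def pos_divide_le_eq mult.commute)
  moreover have "prob {w \<in> space P. (A i w, B i w) \<in> S} = 1 - exceedance i (\<kappa> n * y)" if "i \<ge> 1"
      for i
  proof -
    have "{w \<in> space P. (A i w, B i w) \<in> S} = space P - {w \<in> space P. A i w / B i w > \<kappa> n * y}"
      by (auto simp: S_def)
    then show ?thesis using that by (simp add: prob_compl exceedance_def)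
  qed
  ultimately show ?thesis
    unfolding max_ratio_cdf_def using prob_INTER_pairs[OF n S_sets] by simp
qed

lemma max_ratio_cdf_1_if_nonpos:
  assumes "n \<ge> 1" "\<kappa> n \<le> 0" shows "max_ratio_cdf \<kappa> n 1 = 1"
proof -
  have "AE w in P. max_ratio n w / \<kappa> n \<le> 1"
    using AE_max_ratio_pos[OF assms(1)]
    by eventually_elim
        (use assms(2) in \<open>simp add: divide_nonneg_nonpos order_trans[OF _ zero_le_one]\<close>)
  then show ?thesis unfolding max_ratio_cdf_def by (subst prob_Collect_eq_1) auto
qed

text \<open>If \<kappa> n stayed bounded along a subsequence, the exceedance probabilities at scale \<kappa> n y
  would stay bounded below and max_ratio_cdf \<kappa> n y would decay geometrically.\<close>
lemma scale_tendsto_at_top_if_max_ratio_converges: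
  assumes lim: "\<And>y. y > 0 \<Longrightarrow> (\<lambda>n. max_ratio_cdf \<kappa> n y) \<longlonglongrightarrow> exp (- (y powr (-a)))"
  shows "filterlim \<kappa> at_top sequentially"
    and "eventually (\<lambda>n. \<kappa> n > 0) sequentially"
proof -
  have "eventually (\<lambda>n. max_ratio_cdf \<kappa> n 1 < 1) sequentially"
    using lim[of 1] by (intro order_tendstoD(2)) auto
  then show \<kappa>_pos: "eventually (\<lambda>n. \<kappa> n > 0) sequentially"
    using eventually_ge_at_top[of 1]
  proof eventually_elim
    case (elim n)
    then show ?case using max_ratio_cdf_1_if_nonpos[of n \<kappa>] by force
  qed
  obtain s0 where s0: "s0 > 0" "tail_mass s0 > 0" using tail_mass_pos by blast
  define \<delta> where "\<delta> = tail_mass s0 / (2 * (1 + s0))"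
  have \<delta>: "0 < \<delta>" "\<delta> < 1"
    using s0 tail_mass_le_1[of s0] by (auto simp: \<delta>_def field_simps)
  show "filterlim \<kappa> at_top sequentially"
    unfolding filterlim_at_top
  proof
    fix Z :: real
    define K where "K = max Z 1"
    define y0 where "y0 = s0 / (2 * K)"
    have K: "K > 0" and y0: "y0 > 0" using s0 by (auto simp: K_def y0_def)
    define m where "m = exp (- (y0 powr (-a))) / 2"
    have "eventually (\<lambda>n. max_ratio_cdf \<kappa> n y0 > m) sequentially"
      using lim[OF y0] by (intro order_tendstoD(1)) (auto simp: m_def)
    moreover have "eventually (\<lambda>n. (1 - \<delta>) ^ n < m) sequentially"
      using \<delta> by (intro order_tendstoD(2)[OF LIMSEQ_power_zero]) (auto simp: m_def)
    ultimately show "eventually (\<lambda>n. Z \<le> \<kappa> n) sequentially"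
      using \<kappa>_pos eventually_ge_at_top[of 1]
    proof eventually_elim
      case (elim n)
      show ?case
      proof (rule ccontr)
        assume "\<not> Z \<le> \<kappa> n"
        define s where "s = \<kappa> n * y0"
        have s: "s > 0" using elim y0 by (simp add: s_def)
        have "s \<le> K * y0"
          unfolding s_def using \<open>\<not> Z \<le> \<kappa> n\<close> y0 by (intro mult_right_mono) (auto simp: K_def)
        then have s_small: "2 * s \<le> s0" using K by (simp add: y0_def)
        have \<delta>_le: "\<delta> \<le> exceedance i s" if "i \<in> {1..n}" for i
        proof -
          have "tail_mass s0 / (2 * (1 + s0)) \<le> tail_mass (2 * s) / (2 * exponent 1 s)"
            using tail_mass_antimono[OF s_small] tail_mass_nonneg[of s0] exponent_pos[OF s]
              exponent_bounds(2)[of 1 s] s s_small s0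
            by (intro frac_le) auto
          also have "\<dots> \<le> exceedance i s" using exceedance_ge_tail_mass[of i s 2] that s by simp
          finally show ?thesis by (simp add: \<delta>_def)
        qed
        have "max_ratio_cdf \<kappa> n y0 = (\<Prod>i\<in>{1..n}. 1 - exceedance i s)"
          using max_ratio_cdf_eq_prod[of n \<kappa> y0] elim by (simp add: s_def)
        also have "\<dots> \<le> (\<Prod>i\<in>{1..n}. 1 - \<delta>)"
          using \<delta>_le by (intro prod_mono) (auto simp: exceedance_def)
        finally show False using elim by simp
      qed
    qed
  qed
qed

text \<open>Bounds for n gamma_plus (\<kappa> n y) from - x / (1 - x) \<le> ln (1 - x) \<le> - x, applied to
  max_ratio_cdf \<kappa> n = \<Prod>i. 1 - exceedance i (\<kappa> n y).\<close>
lemma n_gamma_plus_le_max_ratio_cdf: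
  assumes n: "n \<ge> 1" and \<kappa>: "\<kappa> n > 0" and y: "y > 0" and q: "q > 1"
    and pos: "max_ratio_cdf \<kappa> n (y / q) > 0"
  defines "s \<equiv> \<kappa> n * (y / q)"
  shows "real n * gamma_plus M f g (\<kappa> n * y) \<le> - ln (max_ratio_cdf \<kappa> n (y / q))
      * (exponent 1 s / s)"
proof -
  define lo where "lo = s * gamma_plus M f g (\<kappa> n * y) / exponent 1 s"
  have s: "s > 0" using \<kappa> y q by (simp add: s_def)
  have lo_le: "lo \<le> exceedance i s" if "i \<in> {1..n}" for i
    using exceedance_bounds(1)[of i s q] that s q by (simp add: lo_def s_def)
  have "max_ratio_cdf \<kappa> n (y / q) = (\<Prod>i\<in>{1..n}. 1 - exceedance i s)"
    using max_ratio_cdf_eq_prod[of n \<kappa>] n \<kappa> by (simp add: s_def)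
  also have "\<dots> \<le> (\<Prod>i\<in>{1..n}. 1 - lo)"
    using lo_le by (intro prod_mono) (auto simp: exceedance_def)
  finally have cdf_le: "max_ratio_cdf \<kappa> n (y / q) \<le> (1 - lo) ^ n" by simp
  have "1 - lo \<ge> 1 - exceedance 1 s" using lo_le[of 1] n by auto
  moreover have "exceedance 1 s \<le> 1" by (simp add: exceedance_def)
  moreover have "1 - lo \<noteq> 0" using cdf_le pos n by (auto simp: power_0_left)
  ultimately have lo_lt: "lo < 1" by linarith
  have "ln (max_ratio_cdf \<kappa> n (y / q)) \<le> ln ((1 - lo) ^ n)" using cdf_le pos by simp
  also have "\<dots> = real n * ln (1 - lo)" using lo_lt by (simp add: ln_realpow)
  also have "\<dots> \<le> real n * (- lo)" using ln_one_minus_le[OF lo_lt] by (intro mult_left_mono) auto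
  finally have n_lo: "real n * lo \<le> - ln (max_ratio_cdf \<kappa> n (y / q))" by simp
  have "real n * gamma_plus M f g (\<kappa> n * y) = real n * lo * (exponent 1 s / s)"
    using s exponent_pos[OF s] by (simp add: lo_def field_simps)
  also have "\<dots> \<le> - ln (max_ratio_cdf \<kappa> n (y / q)) * (exponent 1 s / s)"
    using n_lo s exponent_pos[OF s] by (intro mult_right_mono) auto
  finally show ?thesis .
qed

lemma n_gamma_plus_ge_max_ratio_cdf:
  assumes n: "n \<ge> 1" and \<kappa>: "\<kappa> n > 0" and y: "y > 0" and q: "q > 1"
  defines "s \<equiv> \<kappa> n * (q * y)"
  defines "hi \<equiv> s * gamma_plus M f g (\<kappa> n * y) / exponent 1 s"
  assumes hi: "hi < 1"
  shows "(1 - hi) * - ln (max_ratio_cdf \<kappa> n (q * y)) * (exponent 1 s / s) \<le> real n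
      * gamma_plus M f g (\<kappa> n * y)"
proof -
  have s: "s > 0" using \<kappa> y q by (simp add: s_def)
  have hi_nonneg: "hi \<ge> 0"
    using s exponent_pos[OF s] gamma_plus_nonneg[of "\<kappa> n * y"] \<kappa> y by (simp add: hi_def)
  have le_hi: "exceedance i s \<le> hi" if "i \<in> {1..n}" for i
    using exceedance_bounds(2)[of i s q] that s q by (simp add: hi_def s_def)
  have "(\<Prod>i\<in>{1..n}. 1 - hi) \<le> (\<Prod>i\<in>{1..n}. 1 - exceedance i s)"
    using le_hi hi by (intro prod_mono) auto
  also have "\<dots> = max_ratio_cdf \<kappa> n (q * y)"
    using max_ratio_cdf_eq_prod[of n \<kappa>] n \<kappa> by (simp add: s_def)
  finally have cdf_ge: "(1 - hi) ^ n \<le> max_ratio_cdf \<kappa> n (q * y)" by simp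
  have "real n * (- hi / (1 - hi)) \<le> real n * ln (1 - hi)"
    using ln_one_minus_ge[OF hi_nonneg hi] by (intro mult_left_mono) auto
  also have "\<dots> = ln ((1 - hi) ^ n)" using hi by (simp add: ln_realpow)
  also have "\<dots> \<le> ln (max_ratio_cdf \<kappa> n (q * y))" using cdf_ge hi by (intro ln_mono) auto
  finally have n_hi: "(1 - hi) * - ln (max_ratio_cdf \<kappa> n (q * y)) \<le> real n * hi"
    using hi by (simp add: field_simps)
  have "(1 - hi) * - ln (max_ratio_cdf \<kappa> n (q * y)) * (exponent 1 s / s) \<le> real n * hi
      * (exponent 1 s / s)"
    using n_hi s exponent_pos[OF s] by (intro mult_right_mono) auto
  also have "\<dots> = real n * gamma_plus M f g (\<kappa> n * y)"
    using s exponent_pos[OF s] by (simp add: hi_def field_simps)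
  finally show ?thesis .
qed

lemma regvar_gamma_plus_if_max_ratio_converges:
  assumes lim: "\<And>y. y > 0 \<Longrightarrow> (\<lambda>n. max_ratio_cdf \<kappa> n y) \<longlonglongrightarrow> exp (- (y powr (-a)))"
  shows "regvar (gamma_plus M f g) (-a)"
proof -
  define G where "G = gamma_plus M f g"
  define V where "V t = exponent 1 t / t" for t
  have \<kappa>_top: "filterlim \<kappa> at_top sequentially" and \<kappa>_pos: "eventually (\<lambda>n. \<kappa> n > 0) sequentially"
    using scale_tendsto_at_top_if_max_ratio_converges[OF lim] by blast+
  have V_lim: "(\<lambda>n. V (\<kappa> n * c)) \<longlonglongrightarrow> 1" if "c > 0" for c
    unfolding V_def by (rule exponent_over_identity_sequence[OF \<kappa>_top that])
  have ln_lim: "(\<lambda>n. - ln (max_ratio_cdf \<kappa> n c)) \<longlonglongrightarrow> c powr (-a)" if "c > 0" for c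
    using tendsto_minus[OF tendsto_ln[OF lim[OF that]]] by simp
  have cdf_pos: "eventually (\<lambda>n. max_ratio_cdf \<kappa> n c > 0) sequentially" if "c > 0" for c
    using lim[OF that] by (rule order_tendstoD(1)) simp
  have nG: "(\<lambda>n. real n * G (\<kappa> n * y)) \<longlonglongrightarrow> y powr (-a)" if y: "y > 0" for y
  proof (rule tendsto_squeeze_at_right_1[where
        lo = "\<lambda>q n. (1 - \<kappa> n * (q * y) * G (\<kappa> n * y) / exponent 1 (\<kappa> n * (q * y)))
          * - ln (max_ratio_cdf \<kappa> n (q * y)) * V (\<kappa> n * (q * y))"
        and hi = "\<lambda>q n. - ln (max_ratio_cdf \<kappa> n (y / q)) * V (\<kappa> n * (y / q))"
        and A = "\<lambda>q. (q * y) powr (-a)" and B = "\<lambda>q. (y / q) powr (-a)"])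
    fix q :: real assume q: "q > 1"
    have hi_0: "(\<lambda>n. \<kappa> n * (q * y) * G (\<kappa> n * y) / exponent 1 (\<kappa> n * (q * y))) \<longlonglongrightarrow> 0"
      unfolding G_def using q y by (intro scaled_gamma_plus_tendsto_0[OF \<kappa>_top]) auto
    have "(\<lambda>n. (1 - \<kappa> n * (q * y) * G (\<kappa> n * y) / exponent 1 (\<kappa> n * (q * y)))
        * - ln (max_ratio_cdf \<kappa> n (q * y)) * V (\<kappa> n * (q * y))) \<longlonglongrightarrow> (1 - 0) * (q * y) powr (-a) * 1"
      using q y by (intro tendsto_mult tendsto_diff tendsto_const hi_0 ln_lim V_lim) auto
    then show "(\<lambda>n. (1 - \<kappa> n * (q * y) * G (\<kappa> n * y) / exponent 1 (\<kappa> n * (q * y)))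
        * - ln (max_ratio_cdf \<kappa> n (q * y)) * V (\<kappa> n * (q * y))) \<longlonglongrightarrow> (q * y) powr (-a)"
      by simp
    have "(\<lambda>n. - ln (max_ratio_cdf \<kappa> n (y / q)) * V (\<kappa> n * (y / q))) \<longlonglongrightarrow> (y / q) powr (-a) * 1"
      using q y by (intro tendsto_mult ln_lim V_lim) auto
    then show "(\<lambda>n. - ln (max_ratio_cdf \<kappa> n (y / q)) * V (\<kappa> n * (y / q))) \<longlonglongrightarrow> (y / q) powr (-a)"
      by simp
    have "y / q > 0" using q y by simp
    show "eventually (\<lambda>n. (1 - \<kappa> n * (q * y) * G (\<kappa> n * y) / exponent 1 (\<kappa> n * (q * y)))
          * - ln (max_ratio_cdf \<kappa> n (q * y)) * V (\<kappa> n * (q * y)) \<le> real n * G (\<kappa> n * y)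
        \<and> real n * G (\<kappa> n * y) \<le> - ln (max_ratio_cdf \<kappa> n (y / q)) * V (\<kappa> n * (y / q))) sequentially"
      using \<kappa>_pos eventually_ge_at_top[of 1] order_tendstoD(2)[OF hi_0 zero_less_one]
        cdf_pos[OF \<open>y / q > 0\<close>]
    proof eventually_elim
      case (elim n)
      then show ?case
        using n_gamma_plus_le_max_ratio_cdf[of n \<kappa> y q]
          n_gamma_plus_ge_max_ratio_cdf[of n \<kappa> y q] q y
        by (simp add: G_def V_def)
    qed
  qed (use tendsto_at_right_1_powr[OF y] in auto)
  have G_pos: "G t > 0" if t: "t > 0" for t
  proof -
    have "eventually (\<lambda>n. real n * G (\<kappa> n * 1) > 0 \<and> t \<le> \<kappa> n) sequentially"
      using order_tendstoD(1)[OF nG[of 1]] \<kappa>_top[unfolded filterlim_at_top, rule_format, of t]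
      by (auto intro: eventually_conj)
    then obtain n where "real n * G (\<kappa> n) > 0" "t \<le> \<kappa> n" by (auto dest: eventually_happens)
    then show ?thesis
      using gamma_plus_antimono[OF t] by (fastforce simp: G_def zero_less_mult_iff)
  qed
  show ?thesis
    using regvar_of_sequence_limit[of G \<kappa> a] gamma_plus_antimono G_pos \<kappa>_top nG by (simp add: G_def)
qed

end

context spectral_sequence
begin

interpretation swapped: spectral_sequence M g f P B A by (rule swap)

lemma prob_scaled_maxima_le_eq_prod:
  assumes n: "n \<ge> 1" and \<kappa>: "\<kappa> n > 0" "\<kappa>' n > 0"
    and x: "\<kappa> n * x \<ge> 1" and y: "\<kappa>' n * y \<ge> 1"
  shows "prob {w \<in> space P. max_ratio n w / \<kappa> n \<le> x \<and> swapped.max_ratio n w / \<kappa>' n \<le> y}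
    = (\<Prod>i\<in>{1..n}. 1 - exceedance i (\<kappa> n * x) - swapped.exceedance i (\<kappa>' n * y))"
proof -
  define T where "T = {z :: real \<times> real. fst z / snd z \<le> \<kappa> n * x \<and> snd z / fst z \<le> \<kappa>' n * y}"
  have "(\<lambda>z::real \<times> real. fst z / snd z) \<in> borel_measurable borel"
    "(\<lambda>z::real \<times> real. snd z / fst z) \<in> borel_measurable borel"
    by (intro borel_measurable_divide borel_measurable_continuous_onI continuous_intros)+
  from measurable_sets[OF this(1), of "{..\<kappa> n * x}"] measurable_sets[OF this(2), of "{..\<kappa>' n * y}"]
  have T_sets: "T \<in> sets borel"
    using sets.Int by (fastforce simp: T_def vimage_def Collect_conj_eq)
  have "{w \<in> space P. max_ratio n w / \<kappa> n \<le> x \<and> swapped.max_ratio n w / \<kappa>' n \<le> y}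
      = (\<Inter>i\<in>{1..n}. {w \<in> space P. (A i w, B i w) \<in> T})"
    using n \<kappa>
    by (auto simp: max_ratio_def swapped.max_ratio_def T_def pos_divide_le_eq mult.commute)
  moreover have "prob {w \<in> space P. (A i w, B i w) \<in> T}
      = 1 - exceedance i (\<kappa> n * x) - swapped.exceedance i (\<kappa>' n * y)" if i: "i \<ge> 1" for i
  proof -
    define E1 where "E1 = {w \<in> space P. A i w / B i w > \<kappa> n * x}"
    define E2 where "E2 = {w \<in> space P. B i w / A i w > \<kappa>' n * y}"
    have E_sets: "E1 \<in> events" "E2 \<in> events"
      unfolding E1_def E2_def using ratio_measurable[OF i] swapped.ratio_measurable[OF i]
      by measurable
    have "E1 \<inter> E2 = {}"
    proof (rule ccontr)
      assume "E1 \<inter> E2 \<noteq> {}"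
      then obtain w where w: "A i w / B i w > \<kappa> n * x" "B i w / A i w > \<kappa>' n * y"
        by (auto simp: E1_def E2_def)
      then have "A i w / B i w > 1" using x by linarith
      then have "inverse (A i w / B i w) < 1" by (simp only: inverse_less_1_iff) simp
      then show False using w(2) y by simp
    qed
    moreover have "{w \<in> space P. (A i w, B i w) \<in> T} = space P - (E1 \<union> E2)"
      by (auto simp: T_def E1_def E2_def not_less)
    ultimately show ?thesis
      using E_sets by (simp add: prob_compl finite_measure_Union E1_def E2_def exceedance_def
          swapped.exceedance_def diff_diff_eq)
  qed
  ultimately show ?thesis using prob_INTER_pairs[OF n T_sets] by simp
qed

lemma prob_scaled_maxima_le_bounds:
  assumes n: "n \<ge> 1" and \<kappa>: "\<kappa> n > 0" "\<kappa>' n > 0"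
    and x: "\<kappa> n * x \<ge> 1" and y: "\<kappa>' n * y \<ge> 1" and q: "q > 1"
  defines "s \<equiv> \<kappa> n * x" and "s' \<equiv> \<kappa>' n * y"
  defines "lo \<equiv> s * gamma_plus M f g (q * s) / exponent 1 s
      + s' * gamma_plus M g f (q * s') / swapped.exponent 1 s'"
    and "hi \<equiv> s * gamma_plus M f g (s / q) / exponent 1 s
      + s' * gamma_plus M g f (s' / q) / swapped.exponent 1 s'"
  assumes hi: "hi \<le> 1"
  shows "(1 - hi) ^ n
      \<le> prob {w \<in> space P. max_ratio n w / \<kappa> n \<le> x \<and> swapped.max_ratio n w / \<kappa>' n \<le> y}"
    and "prob {w \<in> space P. max_ratio n w / \<kappa> n \<le> x \<and> swapped.max_ratio n w / \<kappa>' n \<le> y}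
        \<le> (1 - lo) ^ n"
proof -
  have s: "s > 0" "s' > 0" using x y by (simp_all add: s_def s'_def)
  have bounds: "1 - hi \<le> 1 - exceedance i s - swapped.exceedance i s'"
    "1 - exceedance i s - swapped.exceedance i s' \<le> 1 - lo" if "i \<in> {1..n}" for i
    using exceedance_bounds[of i s q] swapped.exceedance_bounds[of i s' q] that s q
    by (auto simp: lo_def hi_def)
  note prob_eq = prob_scaled_maxima_le_eq_prod[of n \<kappa> \<kappa>' x y, OF n \<kappa> x y, folded s_def s'_def]
  have "(1 - hi) ^ n = (\<Prod>i\<in>{1..n}. 1 - hi)" by simp
  also have "\<dots> \<le> (\<Prod>i\<in>{1..n}. 1 - exceedance i s - swapped.exceedance i s')"
    using bounds(1) hi by (intro prod_mono) auto
  finally show "(1 - hi) ^ n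
      \<le> prob {w \<in> space P. max_ratio n w / \<kappa> n \<le> x \<and> swapped.max_ratio n w / \<kappa>' n \<le> y}"
    unfolding prob_eq .
  have "(\<Prod>i\<in>{1..n}. 1 - exceedance i s - swapped.exceedance i s') \<le> (\<Prod>i\<in>{1..n}. 1 - lo)"
  proof (intro prod_mono conjI)
    fix i assume "i \<in> {1..n}"
    then show "0 \<le> 1 - exceedance i s - swapped.exceedance i s'"
      "1 - exceedance i s - swapped.exceedance i s' \<le> 1 - lo"
      using bounds[of i] hi by linarith+
  qed
  also have "\<dots> = (1 - lo) ^ n" by simp
  finally show "prob {w \<in> space P. max_ratio n w / \<kappa> n \<le> x \<and> swapped.max_ratio n w / \<kappa>' n \<le> y}
      \<le> (1 - lo) ^ n"
    unfolding prob_eq .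
qed

lemma prob_scaled_maxima_le_eventually_0:
  assumes "eventually (\<lambda>n. \<kappa> n > 0 \<and> \<kappa>' n > 0) sequentially" and "x \<le> 0 \<or> y \<le> 0"
  shows "eventually
      (\<lambda>n. prob {w \<in> space P. max_ratio n w / \<kappa> n \<le> x \<and> swapped.max_ratio n w / \<kappa>' n \<le> y} = 0)
    sequentially"
  using assms(1) eventually_ge_at_top[of 1]
proof eventually_elim
  case (elim n)
  then have n: "n \<ge> 1" by simp
  have "AE w in P. \<not> (max_ratio n w / \<kappa> n \<le> x \<and> swapped.max_ratio n w / \<kappa>' n \<le> y)"
    using AE_max_ratio_pos[OF n] swapped.AE_max_ratio_pos[OF n]
  proof eventually_elim
    case (elim w)
    then have "max_ratio n w / \<kappa> n > 0" "swapped.max_ratio n w / \<kappa>' n > 0"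
      using \<open>\<kappa> n > 0 \<and> \<kappa>' n > 0\<close> by simp_all
    then show "\<not> (max_ratio n w / \<kappa> n \<le> x \<and> swapped.max_ratio n w / \<kappa>' n \<le> y)"
      using assms(2) by linarith
  qed
  then show ?case by (subst prob_Collect_eq_0) auto
qed

lemma prob_scaled_maxima_le_tendsto:
  assumes rv: "regvar (gamma_plus M f g) (-a)" "regvar (gamma_plus M g f) (-b)"
    and equiv: "\<kappa> \<sim>[sequentially] (\<lambda>n. geninv (\<lambda>t. 1 / gamma_plus M f g t) (real n))"
      "\<kappa>' \<sim>[sequentially] (\<lambda>n. geninv (\<lambda>t. 1 / gamma_plus M g f t) (real n))"
  shows "(\<lambda>n. prob {w \<in> space P. max_ratio n w / \<kappa> n \<le> x \<and> swapped.max_ratio n w / \<kappa>' n \<le> y})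
    \<longlonglongrightarrow> frechet_cdf a x * frechet_cdf b y"
proof -
  have \<kappa>_top: "filterlim \<kappa> at_top sequentially" "filterlim \<kappa>' at_top sequentially"
    using scale_tendsto_at_top_if_regvar[OF rv(1) equiv(1)]
      swapped.scale_tendsto_at_top_if_regvar[OF rv(2) equiv(2)] .
  then have \<kappa>_pos: "eventually (\<lambda>n. \<kappa> n > 0 \<and> \<kappa>' n > 0) sequentially"
    by (auto simp: filterlim_at_top_dense intro: eventually_conj)
  show ?thesis
  proof (cases "x > 0 \<and> y > 0")
    case False
    then show ?thesis
      using prob_scaled_maxima_le_eventually_0[OF \<kappa>_pos, of x y]
      by (auto simp: frechet_cdf_def tendsto_eventually not_less)
  next
    case True
    then have x: "x > 0" and y: "y > 0" by auto
    define lo where "lo q n = \<kappa> n * x * gamma_plus M f g (q * (\<kappa> n * x)) / exponent 1 (\<kappa> n * x)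
      + \<kappa>' n * y * gamma_plus M g f (q * (\<kappa>' n * y)) / swapped.exponent 1 (\<kappa>' n * y)" for q n
    define hi where "hi q n = \<kappa> n * x * gamma_plus M f g (\<kappa> n * x / q) / exponent 1 (\<kappa> n * x)
      + \<kappa>' n * y * gamma_plus M g f (\<kappa>' n * y / q) / swapped.exponent 1 (\<kappa>' n * y)" for q n
    have "frechet_cdf a x * frechet_cdf b y = exp (- (x powr (-a) + y powr (-b)))"
      using x y by (simp add: frechet_cdf_def exp_add[symmetric])
    also have "(\<lambda>n. prob {w \<in> space P. max_ratio n w / \<kappa> n \<le> x \<and> swapped.max_ratio n w / \<kappa>' n \<le> y})
        \<longlonglongrightarrow> \<dots>"
    proof (rule tendsto_squeeze_at_right_1[where lo = "\<lambda>q n. (1 - hi q n) ^ n"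
        and hi = "\<lambda>q n. (1 - lo q n) ^ n"
          and A = "\<lambda>q. exp (- ((x / q) powr (-a) + (y / q) powr (-b)))"
          and B = "\<lambda>q. exp (- ((q * x) powr (-a) + (q * y) powr (-b)))"])
      fix q :: real assume q: "q > 1"
      have n_lo: "(\<lambda>n. real n * lo q n) \<longlonglongrightarrow> (q * x) powr (-a) + (q * y) powr (-b)"
        and n_hi: "(\<lambda>n. real n * hi q n) \<longlonglongrightarrow> (x / q) powr (-a) + (y / q) powr (-b)"
        using tendsto_add[OF scaled_gamma_plus_tendsto(1)[OF rv(1) equiv(1) x q]
            swapped.scaled_gamma_plus_tendsto(1)[OF rv(2) equiv(2) y q]]
          tendsto_add[OF scaled_gamma_plus_tendsto(2)[OF rv(1) equiv(1) x q]
            swapped.scaled_gamma_plus_tendsto(2)[OF rv(2) equiv(2) y q]]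
        by (simp_all add: lo_def hi_def distrib_left)
      have nonneg: "eventually (\<lambda>n. 0 \<le> lo q n \<and> 0 \<le> hi q n) sequentially"
        using \<kappa>_pos
      proof eventually_elim
        case (elim n)
        then have "\<kappa> n * x > 0" "\<kappa>' n * y > 0" using x y by auto
        then show ?case
          using elim x y q exponent_pos swapped.exponent_pos gamma_plus_nonneg
              swapped.gamma_plus_nonneg
          by (auto simp: lo_def hi_def intro!: add_nonneg_nonneg divide_nonneg_pos
              mult_nonneg_nonneg)
      qed
      show "(\<lambda>n. (1 - lo q n) ^ n) \<longlonglongrightarrow> exp (- ((q * x) powr (-a) + (q * y) powr (-b)))"
        by (rule tendsto_one_minus_power[OF n_lo]) (use nonneg in \<open>auto elim: eventually_mono\<close>)
      show "(\<lambda>n. (1 - hi q n) ^ n) \<longlonglongrightarrow> exp (- ((x / q) powr (-a) + (y / q) powr (-b)))"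
        by (rule tendsto_one_minus_power[OF n_hi]) (use nonneg in \<open>auto elim: eventually_mono\<close>)
      show "eventually (\<lambda>n. (1 - hi q n) ^ n
          \<le> prob {w \<in> space P. max_ratio n w / \<kappa> n \<le> x \<and> swapped.max_ratio n w / \<kappa>' n \<le> y}
        \<and> prob {w \<in> space P. max_ratio n w / \<kappa> n \<le> x \<and> swapped.max_ratio n w / \<kappa>' n \<le> y}
          \<le> (1 - lo q n) ^ n) sequentially"
        using \<kappa>_pos eventually_ge_at_top[of 1]
            order_tendstoD(2)[OF tendsto_0_if_real_times_tendsto[OF n_hi] zero_less_one]
          \<kappa>_top(1)[unfolded filterlim_at_top, rule_format, of "1 / x"]
          \<kappa>_top(2)[unfolded filterlim_at_top, rule_format, of "1 / y"]
      proof eventually_elim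
        case (elim n)
        then have "\<kappa> n * x \<ge> 1" "\<kappa>' n * y \<ge> 1" using x y by (auto simp: field_simps)
        then show ?case
          using prob_scaled_maxima_le_bounds[of n \<kappa> \<kappa>' x y q] elim q
          by (simp add: lo_def hi_def mult_ac)
      qed
    qed (intro tendsto_intros tendsto_at_right_1_powr x y)+
    finally show ?thesis .
  qed
qed

lemma distr_scaled_maxima:
  fixes n :: nat and \<kappa> \<kappa>' :: "nat \<Rightarrow> real"
  defines "Z \<equiv> \<lambda>w. (max_ratio n w / \<kappa> n, swapped.max_ratio n w / \<kappa>' n)"
  shows "prob_space (distr P borel Z)" and "sets (distr P borel Z) = sets borel"
    and "S \<in> sets borel \<Longrightarrow> measure (distr P borel Z) S = prob {w \<in> space P. Z w \<in> S}"
  by (auto intro!: prob_space_distr simp: Z_def measure_distr vimage_def Int_def conj_commute)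

lemma weak_conv_scaled_maxima_if_regvar:
  assumes a: "a > 0" and b: "b > 0"
    and rv: "regvar (gamma_plus M f g) (-a)" "regvar (gamma_plus M g f) (-b)"
    and equiv: "\<kappa> \<sim>[sequentially] (\<lambda>n. geninv (\<lambda>t. 1 / gamma_plus M f g t) (real n))"
      "\<kappa>' \<sim>[sequentially] (\<lambda>n. geninv (\<lambda>t. 1 / gamma_plus M g f t) (real n))"
  shows "weak_conv (\<lambda>n. distr P borel (\<lambda>w. (max_ratio n w / \<kappa> n, swapped.max_ratio n w / \<kappa>' n)))
    (frechet a \<Otimes>\<^sub>M frechet b)"
proof (rule weak_conv_if_cdf_tendsto[OF distr_scaled_maxima(1,2) frechet_pair(1,2)[OF a b]])
  fix x y :: real
  have "{..x} \<times> {..y} \<in> sets (borel :: (real \<times> real) measure)"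
    by (intro Times_borel_sets) auto
  then show "(\<lambda>n. measure (distr P borel (\<lambda>w. (max_ratio n w / \<kappa> n, swapped.max_ratio n w / \<kappa>' n)))
      ({..x} \<times> {..y})) \<longlonglongrightarrow> measure (frechet a \<Otimes>\<^sub>M frechet b) ({..x} \<times> {..y})"
    using prob_scaled_maxima_le_tendsto[OF rv equiv, of x y]
    by (simp add: distr_scaled_maxima(3) frechet_pair(3)[OF a b])
qed

lemma regvar_if_weak_conv_scaled_maxima:
  assumes a: "a > 0" and b: "b > 0"
    and conv: "weak_conv
        (\<lambda>n. distr P borel (\<lambda>w. (max_ratio n w / \<kappa> n, swapped.max_ratio n w / \<kappa>' n)))
      (frechet a \<Otimes>\<^sub>M frechet b)"
  shows "regvar (gamma_plus M f g) (-a)" and "regvar (gamma_plus M g f) (-b)"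
proof -
  note marginal = weak_conv_image_cdf_tendsto[OF conv distr_scaled_maxima(1,2)[where \<kappa> = \<kappa>
      and \<kappa>' = \<kappa>']
      frechet_pair(1,2)[OF a b]]
  have "{z :: real \<times> real. fst z \<le> y} = {..y} \<times> UNIV" "{z :: real \<times> real. snd z \<le> y} = UNIV \<times> {..y}"
      for y
    by auto
  then have sets: "{z :: real \<times> real. fst z \<le> y} \<in> sets borel"
      "{z :: real \<times> real. snd z \<le> y} \<in> sets borel" for y
    by (auto intro: Times_borel_sets)
  show "regvar (gamma_plus M f g) (-a)"
  proof (rule regvar_gamma_plus_if_max_ratio_converges)
    fix y :: real assume "y > 0"
    then show "(\<lambda>n. max_ratio_cdf \<kappa> n y) \<longlonglongrightarrow> exp (- (y powr (-a)))"
      using marginal[where p = fst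
          and x = y] frechet_pair(4)[OF a b] real_distribution_frechet[OF a]
        isCont_frechet_cdf[OF a]
      by (simp add: distr_scaled_maxima(3)[OF sets(1)] cdf_frechet[OF a] max_ratio_cdf_def
          frechet_cdf_def
          continuous_on_fst continuous_on_id)
  qed
  show "regvar (gamma_plus M g f) (-b)"
  proof (rule swapped.regvar_gamma_plus_if_max_ratio_converges)
    fix y :: real assume "y > 0"
    then show "(\<lambda>n. swapped.max_ratio_cdf \<kappa>' n y) \<longlonglongrightarrow> exp (- (y powr (-b)))"
      using marginal[where p = snd
          and x = y] frechet_pair(5)[OF a b] real_distribution_frechet[OF b]
        isCont_frechet_cdf[OF b]
      by (simp add: distr_scaled_maxima(3)[OF sets(2)] cdf_frechet[OF b] swapped.max_ratio_cdf_def
          frechet_cdf_def continuous_on_snd continuous_on_id)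
  qed
qed

lemma weak_conv_scaled_maxima_iff_regvar:
  assumes "a > 0" "b > 0"
    and "\<kappa> \<sim>[sequentially] (\<lambda>n. geninv (\<lambda>t. 1 / gamma_plus M f g t) (real n))"
      "\<kappa>' \<sim>[sequentially] (\<lambda>n. geninv (\<lambda>t. 1 / gamma_plus M g f t) (real n))"
  shows "(regvar (gamma_plus M f g) (-a) \<and> regvar (gamma_plus M g f) (-b)) \<longleftrightarrow>
    weak_conv (\<lambda>n. distr P borel (\<lambda>w. (max_ratio n w / \<kappa> n, swapped.max_ratio n w / \<kappa>' n)))
      (frechet a \<Otimes>\<^sub>M frechet b)"
  using weak_conv_scaled_maxima_if_regvar[OF assms(1,2) _ _ assms(3,4)]
    regvar_if_weak_conv_scaled_maxima[OF assms(1,2)] by blast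

end

theorem theorem2:
  fixes M :: "'a::polish_space measure"
    and f g :: "'a \<Rightarrow> real"
    and P :: "'w measure"
    and X Y :: "nat \<Rightarrow> 'w \<Rightarrow> real"
    and \<kappa>p \<kappa>m :: "nat \<Rightarrow> real"
    and ap am :: real
  assumes M_borel: "sets M = sets borel"
    and M_sf: "sigma_finite_measure M"
    and f_meas: "f \<in> borel_measurable M" and g_meas: "g \<in> borel_measurable M"
    and f_nn: "\<And>s. f s \<ge> 0" and g_nn: "\<And>s. g s \<ge> 0"
    and f_int: "(\<integral>\<^sup>+ s. ennreal (f s) \<partial>M) = 1"
    and g_int: "(\<integral>\<^sup>+ s. ennreal (g s) \<partial>M) = 1"
    and P_prob: "prob_space P"
    and X_rv: "\<And>i. i \<ge> 1 \<Longrightarrow> X i \<in> borel_measurable P"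
    and Y_rv: "\<And>i. i \<ge> 1 \<Longrightarrow> Y i \<in> borel_measurable P"
    and XY_cdf: "\<And>i x y. i \<ge> 1 \<Longrightarrow> x > 0 \<Longrightarrow> y > 0 \<Longrightarrow>
        measure P {w \<in> space P. X i w \<le> x \<and> Y i w \<le> y}
          = exp (- (\<integral>s. max (f s / x) (g s / y) \<partial>M))"
    and XY_indep: "prob_space.indep_vars P (\<lambda>_. borel) (\<lambda>i w. (X i w, Y i w)) {1..}"
    and E_pos: "\<And>t. t > 0 \<Longrightarrow> emeasure M {s \<in> space M. \<not> (f s \<le> t * g s)} > 0"
    and D_pos: "\<And>t. t > 0 \<Longrightarrow> emeasure M {s \<in> space M. f s \<le> t * g s} > 0"
    and \<kappa>p_equiv: "\<kappa>p \<sim>[sequentially] (\<lambda>n. geninv (\<lambda>t. 1 / gamma_plus M f g t) (real n))"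
    and \<kappa>m_equiv: "\<kappa>m \<sim>[sequentially] (\<lambda>n. geninv (\<lambda>t. 1 / gamma_minus M f g t) (real n))"
    and ap_pos: "ap > 0" and am_pos: "am > 0"
  shows "(regvar (gamma_plus M f g) (- ap) \<and> regvar (gamma_minus M f g) (- am)) \<longleftrightarrow>
         weak_conv
           (\<lambda>n. distr P borel (\<lambda>w. (Max ((\<lambda>i. X i w / Y i w) ` {1..n}) / \<kappa>p n,
                                     Max ((\<lambda>i. Y i w / X i w) ` {1..n}) / \<kappa>m n)))
           (frechet ap \<Otimes>\<^sub>M frechet am)"
proof -
  interpret spectral_sequence M f g P X Y
    using f_meas g_meas f_nn g_nn f_int g_int P_prob X_rv Y_rv XY_cdf XY_indep
    by (simp add: spectral_sequence_def spectral_sequence_axioms_def spectral_densities_def)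
  interpret swapped: spectral_sequence M g f P Y X by (rule swap)
  have maxima: "(\<lambda>n. distr P borel (\<lambda>w. (Max ((\<lambda>i. X i w / Y i w) ` {1..n}) / \<kappa>p n,
      Max ((\<lambda>i. Y i w / X i w) ` {1..n}) / \<kappa>m n)))
    = (\<lambda>n. distr P borel (\<lambda>w. (max_ratio n w / \<kappa>p n, swapped.max_ratio n w / \<kappa>m n)))"
    by (simp add: max_ratio_def swapped.max_ratio_def)
  show ?thesis
    unfolding maxima gamma_minus_eq_gamma_plus_swap
    by (rule weak_conv_scaled_maxima_iff_regvar[OF ap_pos am_pos \<kappa>p_equiv
          \<kappa>m_equiv[unfolded gamma_minus_eq_gamma_plus_swap]])
qed

end
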